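(* Let the setting and the algorithm RandProx-FB be as in the context, and suppose $\mu_f>0$ and $0<\gamma<\frac{2}{L_f}$. For $t\ge0$ let $$\Psi^t:=\frac{1}{\gamma}\|x^t-x^\star\|^2+(1+\omega)\big(\gamma(1+\omega)+2\mu_{h^*}\big)\|u^t-u^\star\|^2,$$ where $x^\star$ is the unique minimizer of $f+h$ and $u^\star=-\nabla f(x^\star)$ is the unique minimizer of $f^*(-\cdot)+h^*$. Then for every $t\ge0$, $\mathbb{E}[\Psi^t]\le c^t\Psi^0$, where $$c:=\max\left((1-\gamma\mu_f)^2,\ (\gamma L_f-1)^2,\ 1-\frac{1+\frac{2}{\gamma}\mu_{h^*}}{(1+\omega)\big(1+\omega+\frac{2}{\gamma}\mu_{h^*}\big)}\right)<1.$$ Moreover, $(x^t)$ and $(\hat{x}^t)$ both converge to $x^\star$ and $(u^t)$ converges to $u^\star$, almost surely.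
   Context: $\mathcal{X}$ is a finite-dimensional real Hilbert space; $f:\mathcal{X}\to\mathbb{R}$ is convex and $L_f$-smooth ($\nabla f$ $L_f$-Lipschitz, $L_f>0$) and $\mu_f$-strongly convex ($f-\frac{\mu_f}{2}\|\cdot\|^2$ convex); $h:\mathcal{X}\to\mathbb{R}\cup\{+\infty\}$ is proper closed convex, and its conjugate $h^*$ is $\mu_{h^*}$-strongly convex for some $\mu_{h^*}\ge0$ (possibly $0$). $\mathrm{prox}_{\gamma\phi}(x):=\arg\min_{x'}(\gamma\phi(x')+\frac12\|x'-x\|^2)$. It is assumed there exists $x^\star$ with $0\in\nabla f(x^\star)+\partial h(x^\star)$. Algorithm RandProx-FB: inputs $x^0,u^0\in\mathcal{X}$, $\gamma>0$, $\omega\ge0$; for $t\ge0$: $\hat{x}^t:=x^t-\gamma\nabla f(x^t)-\gamma u^t$; $d^t:=\mathcal{R}^t\big(\hat{x}^t-\mathrm{prox}_{\gamma(1+\omega)h}(\hat{x}^t+\gamma(1+\omega)u^t)\big)$; $u^{t+1}:=u^t+\frac{1}{\gamma(1+\omega)^2}d^t$; $x^{t+1}:=\hat{x}^t-\frac{1}{1+\omega}d^t$. With $\mathcal{F}_t$ the $\sigma$-algebra generated by $(x^0,u^0),\dots,(x^t,u^t)$ and $r^t:=\hat{x}^t-\mathrm{prox}_{\gamma(1+\omega)h}(\hat{x}^t+\gamma(1+\omega)u^t)$, the random estimate $\mathcal{R}^t(r^t)$ satisfies $\mathbb{E}[\mathcal{R}^t(r^t)\mid\mathcal{F}_t]=r^t$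 and $\mathbb{E}[\|\mathcal{R}^t(r^t)-r^t\|^2\mid\mathcal{F}_t]\le\omega\|r^t\|^2$. *)

theory Defs
  imports "HOL-Analysis.Analysis" "HOL-Probability.Probability"
begin

definition ext_convex :: "('a::real_vector \<Rightarrow> ereal) \<Rightarrow> bool" where
  "ext_convex g \<longleftrightarrow> (\<forall>x y. \<forall>t::real. 0 \<le> t \<and> t \<le> 1 \<longrightarrow>
      g ((1 - t) *\<^sub>R x + t *\<^sub>R y) \<le> ereal (1 - t) * g x + ereal t * g y)"

definition ext_proper :: "('a \<Rightarrow> ereal) \<Rightarrow> bool" where
  "ext_proper g \<longleftrightarrow> (\<exists>x. g x < \<infinity>) \<and> (\<forall>x. - \<infinity> < g x)"

definition ext_closed :: "('a::topological_space \<Rightarrow> ereal) \<Rightarrow> bool" where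
  "ext_closed g \<longleftrightarrow> closed {(x, a::real). g x \<le> ereal a}"

definition conjugate :: "('a::real_inner \<Rightarrow> ereal) \<Rightarrow> 'a \<Rightarrow> ereal" where
  "conjugate g u = (SUP x. ereal (u \<bullet> x) - g x)"

definition ext_strongly_convex :: "real \<Rightarrow> ('a::real_inner \<Rightarrow> ereal) \<Rightarrow> bool" where
  "ext_strongly_convex \<mu> g \<longleftrightarrow> ext_convex (\<lambda>x. g x - ereal (\<mu> / 2 * norm x ^ 2))"

definition subdiff :: "('a::real_inner \<Rightarrow> ereal) \<Rightarrow> 'a \<Rightarrow> 'a set" where
  "subdiff g x = {v. \<forall>y. g x + ereal (v \<bullet> (y - x)) \<le> g y}"

definition prox :: "real \<Rightarrow> ('a::real_normed_vector \<Rightarrow> ereal) \<Rightarrow> 'a \<Rightarrow> 'a" where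
  "prox \<gamma> g x = (THE p. \<forall>y. ereal \<gamma> * g p + ereal (norm (p - x) ^ 2 / 2)
                              \<le> ereal \<gamma> * g y + ereal (norm (y - x) ^ 2 / 2))"

definition hist_algebra :: "'w measure \<Rightarrow> (nat \<Rightarrow> 'w \<Rightarrow> 'a::topological_space)
    \<Rightarrow> (nat \<Rightarrow> 'w \<Rightarrow> 'a) \<Rightarrow> nat \<Rightarrow> 'w measure" where
  "hist_algebra M x u t = sigma (space M)
     (\<Union>i\<le>t. {(\<lambda>\<omega>. (x i \<omega>, u i \<omega>)) -` A \<inter> space M | A. A \<in> sets borel})"

definition rpfb_xhat :: "real \<Rightarrow> ('a::real_vector \<Rightarrow> 'a) \<Rightarrow> 'a \<Rightarrow> 'a \<Rightarrow> 'a" where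
  "rpfb_xhat \<gamma> gradf xt ut = xt - \<gamma> *\<^sub>R gradf xt - \<gamma> *\<^sub>R ut"

definition rpfb_r :: "real \<Rightarrow> real \<Rightarrow> ('a::real_normed_vector \<Rightarrow> ereal) \<Rightarrow> ('a \<Rightarrow> 'a) \<Rightarrow> 'a \<Rightarrow> 'a \<Rightarrow> 'a" where
  "rpfb_r \<gamma> \<omega> h gradf xt ut =
     rpfb_xhat \<gamma> gradf xt ut
       - prox (\<gamma> * (1 + \<omega>)) h (rpfb_xhat \<gamma> gradf xt ut + (\<gamma> * (1 + \<omega>)) *\<^sub>R ut)"

end

theory Submission
  imports Defs
begin

text \<open>\<Psi> is a Lyapunov function. Replace the random estimate d by its conditional mean r and let v be
  the subgradient of h produced by the prox step. The gradient step contracts the x-part of \<Psi> by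
  max ((1 - \<gamma> \<mu>f)^2, (\<gamma> Lf - 1)^2), by co-coercivity of the gradient of f - \<mu>f/2 |.|^2; strong
  convexity of h* makes the inverse of the subdifferential of h strongly monotone, which contracts the
  u-part by the third term of c with enough slack to absorb \<omega> times the variance of d. The
  unbiasedness of d kills the cross term in expectation, so E \<Psi>^(t+1) \<le> c E \<Psi>^t. The geometric
  bounds are summable, hence \<Psi>^t \<rightarrow> 0 almost surely, and the iterates converge.\<close>

section \<open>Smooth convex functions\<close>

lemma convex_on_gradient_ineq:
  fixes g :: "'a::real_inner \<Rightarrow> real"
  assumes cv: "convex_on UNIV g" and dg: "\<And>z. (g has_derivative (\<lambda>v. G z \<bullet> v)) (at z)"
  shows "g z + G z \<bullet> (y - z) \<le> g y"
proof -
  define \<phi> where "\<phi> t = g (z + t *\<^sub>R (y - z))" for t :: real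
  have "convex_on UNIV \<phi>"
    unfolding \<phi>_def
  proof (rule convex_onI)
    fix a b t :: real assume t: "0 < t" "t < 1"
    have "z + ((1 - t) *\<^sub>R a + t *\<^sub>R b) *\<^sub>R (y - z) =
          (1 - t) *\<^sub>R (z + a *\<^sub>R (y - z)) + t *\<^sub>R (z + b *\<^sub>R (y - z))"
      by (simp add: algebra_simps)
    then show "g (z + ((1 - t) *\<^sub>R a + t *\<^sub>R b) *\<^sub>R (y - z))
       \<le> (1 - t) * g (z + a *\<^sub>R (y - z)) + t * g (z + b *\<^sub>R (y - z))"
      using convex_onD[OF cv, of t] t by simp
  qed simp
  moreover have "(\<phi> has_field_derivative (G z \<bullet> (y - z))) (at 0)"
  proof -
    have "((\<lambda>t. z + t *\<^sub>R (y - z)) has_derivative (\<lambda>t. t *\<^sub>R (y - z))) (at 0)"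
      by (auto intro!: derivative_eq_intros)
    moreover have "(g has_derivative (\<lambda>v. G z \<bullet> v)) (at (z + 0 *\<^sub>R (y - z)))"
      using dg[of z] by simp
    ultimately have "(\<phi> has_derivative (\<lambda>t. G z \<bullet> (t *\<^sub>R (y - z)))) (at 0)"
      unfolding \<phi>_def by (rule diff_chain_at[unfolded o_def])
    then show ?thesis
      unfolding has_field_derivative_def
      by (rule has_derivative_eq_rhs) (auto simp: fun_eq_iff mult.commute)
  qed
  ultimately show ?thesis
    using convex_on_imp_above_tangent[of UNIV \<phi> 0 1 "G z \<bullet> (y - z)"] by (simp add: \<phi>_def)
qed

lemma gradient_monotone:
  fixes g :: "'a::real_inner \<Rightarrow> real"
  assumes "convex_on UNIV g" and "\<And>z. (g has_derivative (\<lambda>v. G z \<bullet> v)) (at z)"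
  shows "0 \<le> (G x - G y) \<bullet> (x - y)"
proof -
  have "g x + G x \<bullet> (y - x) \<le> g y" "g y + G y \<bullet> (x - y) \<le> g x"
    by (rule convex_on_gradient_ineq[OF assms])+
  moreover have "G x \<bullet> (y - x) + G y \<bullet> (x - y) = - ((G x - G y) \<bullet> (x - y))"
    by (simp add: inner_diff_left inner_diff_right algebra_simps)
  ultimately show ?thesis by linarith
qed

lemma descent_lemma:
  fixes g :: "'a::real_inner \<Rightarrow> real"
  assumes dg: "\<And>z. (g has_derivative (\<lambda>v. G z \<bullet> v)) (at z)"
    and K: "\<And>a b. (G a - G b) \<bullet> (a - b) \<le> K * norm (a - b) ^ 2"
  shows "g y \<le> g x + G x \<bullet> (y - x) + K / 2 * norm (y - x) ^ 2"
proof -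
  define \<psi> where
    "\<psi> t = g (x + t *\<^sub>R (y - x)) - t * (G x \<bullet> (y - x)) - K / 2 * t\<^sup>2 * norm (y - x) ^ 2" for t :: real
  have "\<psi> 1 \<le> \<psi> 0"
  proof (rule DERIV_nonpos_imp_nonincreasing[of 0 1])
    fix t :: real assume t: "0 \<le> t" "t \<le> 1"
    define xt where "xt = x + t *\<^sub>R (y - x)"
    have "((\<lambda>t. x + t *\<^sub>R (y - x)) has_derivative (\<lambda>s. s *\<^sub>R (y - x))) (at t)"
      by (auto intro!: derivative_eq_intros)
    from diff_chain_at[OF this dg]
    have "((\<lambda>t. g (x + t *\<^sub>R (y - x))) has_derivative (\<lambda>s. G xt \<bullet> (s *\<^sub>R (y - x)))) (at t)"
      by (simp add: o_def xt_def)
    then have "(\<psi> has_derivative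
        (\<lambda>s. G xt \<bullet> (s *\<^sub>R (y - x)) - s * (G x \<bullet> (y - x)) - K / 2 * (2 * t * s) * norm (y - x) ^ 2)) (at t)"
      unfolding \<psi>_def by (auto intro!: derivative_eq_intros simp: power2_eq_square algebra_simps)
    then have "DERIV \<psi> t :> (G xt - G x) \<bullet> (y - x) - K * t * norm (y - x) ^ 2"
      unfolding has_field_derivative_def
      by (rule has_derivative_eq_rhs) (auto simp: fun_eq_iff algebra_simps inner_diff_left)
    moreover have "(G xt - G x) \<bullet> (y - x) \<le> K * t * norm (y - x) ^ 2"
    proof (cases "t = 0")
      case False
      have "t * ((G xt - G x) \<bullet> (y - x)) = (G xt - G x) \<bullet> (xt - x)"
        by (simp add: xt_def)
      also have "\<dots> \<le> K * norm (xt - x) ^ 2" by (rule K)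
      also have "\<dots> = t * (K * t * norm (y - x) ^ 2)"
        using t by (simp add: xt_def power2_eq_square)
      finally show ?thesis using False t by (simp add: mult_le_cancel_left_pos)
    qed (simp add: xt_def)
    ultimately show "\<exists>y'. DERIV \<psi> t :> y' \<and> y' \<le> 0" by force
  qed simp
  then show ?thesis by (simp add: \<psi>_def algebra_simps)
qed

text \<open>Compare g with its tangent at x at the point w = y - (1/K) (G y - G x), where the
  descent lemma at y is sharpest.\<close>

lemma convex_smooth_lower_bound:
  fixes g :: "'a::real_inner \<Rightarrow> real"
  assumes cv: "convex_on UNIV g" and dg: "\<And>z. (g has_derivative (\<lambda>v. G z \<bullet> v)) (at z)"
    and K: "\<And>a b. (G a - G b) \<bullet> (a - b) \<le> K * norm (a - b) ^ 2" and K_pos: "K > 0"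
  shows "g x + G x \<bullet> (y - x) + norm (G y - G x) ^ 2 / (2 * K) \<le> g y"
proof -
  define D where "D = G y - G x"
  define w where "w = y - (1 / K) *\<^sub>R D"
  have "g x + G x \<bullet> (w - x) \<le> g w" by (rule convex_on_gradient_ineq[OF cv dg])
  also have "g w \<le> g y + G y \<bullet> (w - y) + K / 2 * norm (w - y) ^ 2" by (rule descent_lemma[OF dg K])
  also have "G x \<bullet> (w - x) = G x \<bullet> (y - x) - (G x \<bullet> D) / K"
    by (simp add: w_def inner_diff_right algebra_simps)
  also have "G y \<bullet> (w - y) = - (G y \<bullet> D) / K"
    by (simp add: w_def)
  also have "K / 2 * norm (w - y) ^ 2 = norm D ^ 2 / (2 * K)"
    using K_pos by (simp add: w_def power2_eq_square field_simps)
  finally have "g x + G x \<bullet> (y - x) + (G y \<bullet> D - G x \<bullet> D) / K \<le> g y + norm D ^ 2 / (2 * K)"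
    by (simp add: diff_divide_distrib)
  moreover have "G y \<bullet> D - G x \<bullet> D = norm D ^ 2"
    by (simp add: D_def power2_norm_eq_inner inner_diff_left)
  ultimately have "g x + G x \<bullet> (y - x) + norm D ^ 2 / K \<le> g y + norm D ^ 2 / (2 * K)"
    by simp
  then show ?thesis
    by (simp add: D_def)
qed

lemma gradient_cocoercive:
  fixes g :: "'a::real_inner \<Rightarrow> real"
  assumes cv: "convex_on UNIV g" and dg: "\<And>z. (g has_derivative (\<lambda>v. G z \<bullet> v)) (at z)"
    and K: "\<And>a b. (G a - G b) \<bullet> (a - b) \<le> K * norm (a - b) ^ 2" and K_nonneg: "K \<ge> 0"
  shows "norm (G x - G y) ^ 2 \<le> K * ((G x - G y) \<bullet> (x - y))"
proof -
  define P where "P = (G x - G y) \<bullet> (x - y)"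
  have P_nonneg: "P \<ge> 0" unfolding P_def by (rule gradient_monotone[OF cv dg])
  have cocoercive: "norm (G x - G y) ^ 2 \<le> K' * P" if K': "K \<le> K'" "K' > 0" for K'
  proof -
    have K'_bound: "(G a - G b) \<bullet> (a - b) \<le> K' * norm (a - b) ^ 2" for a b
      using K[of a b] mult_right_mono[OF K'(1) zero_le_power2[of "norm (a - b)"]] by linarith
    have "g x + G x \<bullet> (y - x) + norm (G y - G x) ^ 2 / (2 * K') \<le> g y"
      and "g y + G y \<bullet> (x - y) + norm (G x - G y) ^ 2 / (2 * K') \<le> g x"
      by (rule convex_smooth_lower_bound[OF cv dg K'_bound K'(2)])+
    moreover have "G x \<bullet> (y - x) + G y \<bullet> (x - y) = - P"
      by (simp add: P_def inner_diff_left inner_diff_right algebra_simps)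
    ultimately have "norm (G x - G y) ^ 2 / K' \<le> P"
      by (simp add: norm_minus_commute field_simps)
    then show ?thesis using K' by (simp add: field_simps)
  qed
  show ?thesis
    unfolding P_def[symmetric]
  proof (rule field_le_epsilon)
    fix e :: real assume e: "e > 0"
    have "norm (G x - G y) ^ 2 \<le> (K + e / (P + 1)) * P"
      using e P_nonneg K_nonneg by (intro cocoercive) (auto intro: add_nonneg_pos)
    also have "\<dots> \<le> K * P + e"
      using e P_nonneg by (simp add: field_simps)
    finally show "norm (G x - G y) ^ 2 \<le> K * P + e" .
  qed
qed

lemma lipschitz_on_inner_le:
  fixes G :: "'a::real_inner \<Rightarrow> 'a"
  assumes "L-lipschitz_on UNIV G"
  shows "(G a - G b) \<bullet> (a - b) \<le> L * norm (a - b) ^ 2"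
proof -
  have "(G a - G b) \<bullet> (a - b) \<le> norm (G a - G b) * norm (a - b)"
    by (rule norm_cauchy_schwarz)
  also have "\<dots> \<le> L * norm (a - b) * norm (a - b)"
    using lipschitz_onD[OF assms, of a b] by (intro mult_right_mono) (auto simp: dist_norm)
  finally show ?thesis by (simp add: power2_eq_square mult.assoc)
qed

lemma power2_norm_add_scaleR:
  fixes v e :: "'a::real_inner"
  shows "norm (v + t *\<^sub>R e) ^ 2 = norm v ^ 2 + 2 * t * (v \<bullet> e) + t\<^sup>2 * norm e ^ 2"
proof -
  have "norm (v + t *\<^sub>R e) ^ 2 = v \<bullet> v + 2 * t * (v \<bullet> e) + t\<^sup>2 * (e \<bullet> e)"
    unfolding power2_norm_eq_inner
    by (simp add: inner_add_left inner_add_right inner_commute[of e v] algebra_simps power2_eq_square)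
  then show ?thesis by (simp add: power2_norm_eq_inner)
qed

lemma power2_norm_add_le:
  fixes X Y :: "'a::real_normed_vector"
  shows "norm (X + Y) ^ 2 \<le> 2 * norm X ^ 2 + 2 * norm Y ^ 2"
proof -
  have "norm (X + Y) ^ 2 \<le> (norm X + norm Y) ^ 2"
    by (simp add: norm_triangle_ineq power_mono)
  also have "\<dots> = 2 * norm X ^ 2 + 2 * norm Y ^ 2 - (norm X - norm Y) ^ 2"
    by (simp add: power2_eq_square algebra_simps)
  also have "\<dots> \<le> 2 * norm X ^ 2 + 2 * norm Y ^ 2" by simp
  finally show ?thesis .
qed

lemma has_derivative_minus_quadratic:
  fixes f :: "'a::real_inner \<Rightarrow> real"
  assumes "(f has_derivative (\<lambda>v. F \<bullet> v)) (at z)"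
  shows "((\<lambda>z. f z - \<mu> / 2 * norm z ^ 2) has_derivative (\<lambda>v. (F - \<mu> *\<^sub>R z) \<bullet> v)) (at z)"
proof -
  have "((\<lambda>z. f z - \<mu> / 2 * (z \<bullet> z)) has_derivative (\<lambda>v. F \<bullet> v - \<mu> / 2 * (z \<bullet> v + v \<bullet> z))) (at z)"
    by (auto intro!: derivative_eq_intros assms)
  then show ?thesis
    unfolding power2_norm_eq_inner
    by (rule has_derivative_eq_rhs) (auto simp: fun_eq_iff inner_diff_left inner_commute algebra_simps)
qed

lemma strong_convexity_le_lipschitz:
  fixes f :: "'a::euclidean_space \<Rightarrow> real"
  assumes f_grad: "\<And>z. (f has_derivative (\<lambda>v. gradf z \<bullet> v)) (at z)"
    and f_smooth: "L-lipschitz_on UNIV gradf"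
    and f_strong: "convex_on UNIV (\<lambda>z. f z - \<mu> / 2 * norm z ^ 2)"
  shows "\<mu> \<le> L"
proof -
  obtain b :: 'a where b: "b \<in> Basis" using nonempty_Basis by blast
  have "0 \<le> ((gradf b - \<mu> *\<^sub>R b) - (gradf 0 - \<mu> *\<^sub>R 0)) \<bullet> (b - 0)"
    by (rule gradient_monotone[OF f_strong has_derivative_minus_quadratic[OF f_grad]])
  also have "\<dots> = (gradf b - gradf 0) \<bullet> (b - 0) - \<mu> * norm b ^ 2"
    by (simp add: power2_norm_eq_inner inner_diff_left)
  also have "(gradf b - gradf 0) \<bullet> (b - 0) \<le> L * norm b ^ 2"
    using lipschitz_on_inner_le[OF f_smooth, of b 0] by simp
  finally have "0 \<le> (L - \<mu>) * norm b ^ 2" by (simp add: algebra_simps)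
  moreover have "norm b ^ 2 > 0" using b by (simp add: nonzero_Basis)
  ultimately show ?thesis by (simp add: zero_le_mult_iff)
qed

lemma cocoercive_quadratic_le_max:
  fixes s \<gamma> K A B P :: real
  assumes "\<gamma> > 0" "K \<ge> 0" "B \<le> K * P" "0 \<le> P" "P \<le> K * A" "A \<ge> 0"
  shows "s\<^sup>2 * A - 2 * \<gamma> * s * P + \<gamma>\<^sup>2 * B \<le> max (s\<^sup>2) ((s - \<gamma> * K)\<^sup>2) * A"
proof -
  have "\<gamma>\<^sup>2 * B \<le> \<gamma>\<^sup>2 * (K * P)" using assms by (intro mult_left_mono) auto
  then have le: "s\<^sup>2 * A - 2 * \<gamma> * s * P + \<gamma>\<^sup>2 * B \<le> s\<^sup>2 * A + (\<gamma>\<^sup>2 * K - 2 * \<gamma> * s) * P"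
    by (simp add: algebra_simps)
  show ?thesis
  proof (cases "\<gamma>\<^sup>2 * K - 2 * \<gamma> * s \<le> 0")
    case True
    then have "(\<gamma>\<^sup>2 * K - 2 * \<gamma> * s) * P \<le> 0" using assms by (simp add: mult_nonpos_nonneg)
    moreover have "s\<^sup>2 * A \<le> max (s\<^sup>2) ((s - \<gamma> * K)\<^sup>2) * A" using assms by (intro mult_right_mono) auto
    ultimately show ?thesis using le by linarith
  next
    case False
    then have "(\<gamma>\<^sup>2 * K - 2 * \<gamma> * s) * P \<le> (\<gamma>\<^sup>2 * K - 2 * \<gamma> * s) * (K * A)"
      using assms by (intro mult_left_mono) auto
    moreover have "s\<^sup>2 * A + (\<gamma>\<^sup>2 * K - 2 * \<gamma> * s) * (K * A) = (s - \<gamma> * K)\<^sup>2 * A"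
      by (simp add: power2_eq_square algebra_simps)
    moreover have "(s - \<gamma> * K)\<^sup>2 * A \<le> max (s\<^sup>2) ((s - \<gamma> * K)\<^sup>2) * A"
      using assms by (intro mult_right_mono) auto
    ultimately show ?thesis using le by linarith
  qed
qed

text \<open>Write the gradient step as (1 - \<gamma> \<mu>) a - \<gamma> b with a = x - y and b the gradient difference of
  the convex function f - \<mu>/2 |.|^2, which is (L - \<mu>)-co-coercive.\<close>

lemma gradient_step_contraction:
  fixes f :: "'a::euclidean_space \<Rightarrow> real"
  assumes f_grad: "\<And>z. (f has_derivative (\<lambda>v. gradf z \<bullet> v)) (at z)"
    and f_smooth: "L-lipschitz_on UNIV gradf"
    and f_strong: "convex_on UNIV (\<lambda>z. f z - \<mu> / 2 * norm z ^ 2)"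
    and \<gamma>: "\<gamma> > 0"
  shows "norm ((x - \<gamma> *\<^sub>R gradf x) - (y - \<gamma> *\<^sub>R gradf y)) ^ 2
          \<le> max ((1 - \<gamma> * \<mu>)\<^sup>2) ((\<gamma> * L - 1)\<^sup>2) * norm (x - y) ^ 2"
proof -
  define G where "G z = gradf z - \<mu> *\<^sub>R z" for z
  note cv = f_strong and dg = has_derivative_minus_quadratic[OF f_grad, of \<mu>, folded G_def]
  have K: "(G a - G b) \<bullet> (a - b) \<le> (L - \<mu>) * norm (a - b) ^ 2" for a b
    using lipschitz_on_inner_le[OF f_smooth, of a b]
    by (simp add: G_def power2_norm_eq_inner inner_diff_left inner_diff_right algebra_simps)
  have K_nonneg: "L - \<mu> \<ge> 0"
    using strong_convexity_le_lipschitz[OF f_grad f_smooth f_strong] by simp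
  define a where "a = x - y"
  define b where "b = G x - G y"
  have cc: "norm b ^ 2 \<le> (L - \<mu>) * (b \<bullet> a)"
    unfolding a_def b_def by (rule gradient_cocoercive[OF cv dg K K_nonneg])
  have P_nonneg: "0 \<le> b \<bullet> a"
    unfolding a_def b_def by (rule gradient_monotone[OF cv dg])
  have "b \<bullet> a \<le> (L - \<mu>) * norm a ^ 2"
    unfolding a_def b_def by (rule K)
  then have "(1 - \<gamma> * \<mu>)\<^sup>2 * norm a ^ 2 - 2 * \<gamma> * (1 - \<gamma> * \<mu>) * (b \<bullet> a) + \<gamma>\<^sup>2 * norm b ^ 2
      \<le> max ((1 - \<gamma> * \<mu>)\<^sup>2) ((1 - \<gamma> * \<mu> - \<gamma> * (L - \<mu>))\<^sup>2) * norm a ^ 2"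
    by (intro cocoercive_quadratic_le_max[OF \<gamma> K_nonneg cc P_nonneg]) auto
  moreover have "(1 - \<gamma> * \<mu> - \<gamma> * (L - \<mu>))\<^sup>2 = (\<gamma> * L - 1)\<^sup>2"
    by (simp add: power2_eq_square algebra_simps)
  moreover have "(x - \<gamma> *\<^sub>R gradf x) - (y - \<gamma> *\<^sub>R gradf y) = (1 - \<gamma> * \<mu>) *\<^sub>R a + (- \<gamma>) *\<^sub>R b"
    by (simp add: a_def b_def G_def algebra_simps)
  moreover have "norm ((1 - \<gamma> * \<mu>) *\<^sub>R a + (- \<gamma>) *\<^sub>R b) ^ 2
      = (1 - \<gamma> * \<mu>)\<^sup>2 * norm a ^ 2 - 2 * \<gamma> * (1 - \<gamma> * \<mu>) * (b \<bullet> a) + \<gamma>\<^sup>2 * norm b ^ 2"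
    unfolding power2_norm_add_scaleR by (simp add: power_mult_distrib inner_commute[of a b])
  ultimately show ?thesis
    by (simp only: a_def)
qed

section \<open>Extended-real convex functions and the proximity operator\<close>

lemma nonpos_if_le_scaled:
  fixes X c :: real
  assumes "\<And>t. 0 < t \<Longrightarrow> t \<le> 1 \<Longrightarrow> X \<le> c * t"
  shows "X \<le> 0"
proof (rule ccontr)
  assume X: "\<not> X \<le> 0"
  show False
  proof (cases "c \<le> 0")
    case True
    with assms[of 1] X show False by simp
  next
    case False
    define t where "t = min 1 (X / (2 * c))"
    have t: "0 < t" "t \<le> 1" using X False by (auto simp: t_def)
    have "c * t \<le> c * (X / (2 * c))" using False by (intro mult_left_mono) (auto simp: t_def)
    also have "\<dots> = X / 2" using False by simp
    finally show False using assms[OF t] X by simp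
  qed
qed

lemma subdiff_imp_finite:
  assumes "ext_proper h" "v \<in> subdiff h x"
  shows "\<bar>h x\<bar> \<noteq> \<infinity>"
proof -
  obtain y where y: "h y < \<infinity>" using assms(1) unfolding ext_proper_def by blast
  have "h x + ereal (v \<bullet> (y - x)) \<le> h y" using assms(2) unfolding subdiff_def by blast
  then have "h x \<noteq> \<infinity>" using y by auto
  moreover have "h x \<noteq> -\<infinity>" using assms(1) unfolding ext_proper_def by auto
  ultimately show ?thesis by auto
qed

lemma subdiff_monotone:
  assumes "ext_proper h" "v1 \<in> subdiff h x1" "v2 \<in> subdiff h x2"
  shows "0 \<le> (v1 - v2) \<bullet> (x1 - x2)"
proof -
  obtain H1 where H1: "h x1 = ereal H1" using subdiff_imp_finite[OF assms(1,2)] by (cases "h x1") auto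
  obtain H2 where H2: "h x2 = ereal H2" using subdiff_imp_finite[OF assms(1,3)] by (cases "h x2") auto
  have "h x1 + ereal (v1 \<bullet> (x2 - x1)) \<le> h x2" "h x2 + ereal (v2 \<bullet> (x1 - x2)) \<le> h x1"
    using assms(2,3) unfolding subdiff_def by blast+
  then have "H1 + v1 \<bullet> (x2 - x1) \<le> H2" "H2 + v2 \<bullet> (x1 - x2) \<le> H1"
    by (simp_all add: H1 H2)
  moreover have "v1 \<bullet> (x2 - x1) + v2 \<bullet> (x1 - x2) = - ((v1 - v2) \<bullet> (x1 - x2))"
    by (simp add: inner_diff_left inner_diff_right algebra_simps)
  ultimately show ?thesis by linarith
qed

text \<open>The hypothesis says that p is a subgradient of k + q at v, where q w = a/2 |w|^2 + b \<bullet> w;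
  comparing both sides along the segment from v to w near v removes q up to its gradient.\<close>

lemma ext_convex_subdiff_add_quadratic:
  fixes k :: "'a::real_inner \<Rightarrow> ereal"
  assumes cv: "ext_convex k" and fin: "\<And>w. k w > -\<infinity>" and kv: "k v \<noteq> \<infinity>"
    and sub: "\<And>w. k v + ereal (a / 2 * norm v ^ 2 + b \<bullet> v + p \<bullet> (w - v))
                  \<le> k w + ereal (a / 2 * norm w ^ 2 + b \<bullet> w)"
  shows "p - a *\<^sub>R v - b \<in> subdiff k v"
  unfolding subdiff_def
proof (intro CollectI allI)
  fix w
  show "k v + ereal ((p - a *\<^sub>R v - b) \<bullet> (w - v)) \<le> k w"
  proof (cases "k w = \<infinity>")
    case False
    obtain V where V: "k v = ereal V" using kv fin[of v] by (cases "k v") auto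
    obtain W where W: "k w = ereal W" using False fin[of w] by (cases "k w") auto
    have "V + (p - a *\<^sub>R v - b) \<bullet> (w - v) - W \<le> 0"
    proof (rule nonpos_if_le_scaled)
      fix t :: real assume t: "0 < t" "t \<le> 1"
      define wt where "wt = v + t *\<^sub>R (w - v)"
      have "k wt \<le> ereal (1 - t) * k v + ereal t * k w"
        using cv t unfolding ext_convex_def wt_def by (auto simp: algebra_simps)
      then obtain Kt where Kt: "k wt = ereal Kt" "Kt \<le> (1 - t) * V + t * W"
        using fin[of wt] by (cases "k wt") (auto simp: V W)
      have "norm wt ^ 2 = norm v ^ 2 + 2 * t * (v \<bullet> (w - v)) + t\<^sup>2 * norm (w - v) ^ 2"
        unfolding wt_def by (rule power2_norm_add_scaleR)
      moreover have "p \<bullet> (wt - v) = t * (p \<bullet> (w - v))" "b \<bullet> wt = b \<bullet> v + t * (b \<bullet> (w - v))"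
        by (simp_all add: wt_def inner_add_right)
      moreover have "V + (a / 2 * norm v ^ 2 + b \<bullet> v + p \<bullet> (wt - v)) \<le> Kt + (a / 2 * norm wt ^ 2 + b \<bullet> wt)"
        using sub[of wt] by (simp add: V Kt)
      ultimately have "V + (a / 2 * norm v ^ 2 + b \<bullet> v + t * (p \<bullet> (w - v)))
          \<le> Kt + (a / 2 * (norm v ^ 2 + 2 * t * (v \<bullet> (w - v)) + t\<^sup>2 * norm (w - v) ^ 2) + (b \<bullet> v + t * (b \<bullet> (w - v))))"
        by simp
      then have "t * (V + (p - a *\<^sub>R v - b) \<bullet> (w - v) - W) \<le> t * (a / 2 * norm (w - v) ^ 2 * t)"
        using Kt by (simp add: inner_diff_left algebra_simps power2_eq_square)
      then show "V + (p - a *\<^sub>R v - b) \<bullet> (w - v) - W \<le> a / 2 * norm (w - v) ^ 2 * t"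
        using t by (simp add: mult_le_cancel_left_pos)
    qed
    then show ?thesis by (simp add: V W)
  qed simp
qed

definition prox_objective :: "real \<Rightarrow> ('a::real_normed_vector \<Rightarrow> ereal) \<Rightarrow> 'a \<Rightarrow> 'a \<Rightarrow> ereal" where
  "prox_objective \<tau> h z p = ereal \<tau> * h p + ereal (norm (p - z) ^ 2 / 2)"

lemma prox_objective_minimiser_subdiff:
  fixes h :: "'a::real_inner \<Rightarrow> ereal"
  assumes \<tau>: "\<tau> > 0" and cv: "ext_convex h" and pr: "ext_proper h"
    and min: "\<And>y. prox_objective \<tau> h z p \<le> prox_objective \<tau> h z y"
  shows "(1 / \<tau>) *\<^sub>R (z - p) \<in> subdiff h p"
proof -
  have fin: "h w > -\<infinity>" for w using pr unfolding ext_proper_def by auto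
  obtain y0 where y0: "h y0 < \<infinity>" using pr unfolding ext_proper_def by blast
  have "prox_objective \<tau> h z p \<le> prox_objective \<tau> h z y0" by (rule min)
  moreover have "prox_objective \<tau> h z y0 < \<infinity>" using y0 fin[of y0] \<tau>
    by (cases "h y0") (auto simp: prox_objective_def)
  ultimately have hp: "h p \<noteq> \<infinity>" using \<tau> by (auto simp: prox_objective_def)
  obtain P where P: "h p = ereal P" using hp fin[of p] by (cases "h p") auto
  have "0 - (1 / \<tau>) *\<^sub>R p - (- (1 / \<tau>) *\<^sub>R z) \<in> subdiff h p"
  proof (rule ext_convex_subdiff_add_quadratic[OF cv fin hp])
    fix w
    show "h p + ereal (1 / \<tau> / 2 * (norm p)\<^sup>2 + - (1 / \<tau>) *\<^sub>R z \<bullet> p + 0 \<bullet> (w - p))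
         \<le> h w + ereal (1 / \<tau> / 2 * (norm w)\<^sup>2 + - (1 / \<tau>) *\<^sub>R z \<bullet> w)"
    proof (cases "h w")
      case (real W)
      have "prox_objective \<tau> h z p \<le> prox_objective \<tau> h z w" by (rule min)
      then have "\<tau> * P + norm (p - z) ^ 2 / 2 \<le> \<tau> * W + norm (w - z) ^ 2 / 2"
        by (simp add: prox_objective_def P real)
      then have "\<tau> * (P + 1 / \<tau> / 2 * (norm p)\<^sup>2 - 1 / \<tau> * (z \<bullet> p))
          \<le> \<tau> * (W + 1 / \<tau> / 2 * (norm w)\<^sup>2 - 1 / \<tau> * (z \<bullet> w))"
        using \<tau> by (simp add: power2_norm_eq_inner inner_diff_left inner_diff_right inner_commute
            algebra_simps add_divide_distrib diff_divide_distrib)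
      then show ?thesis
        using \<tau> by (simp add: mult_le_cancel_left_pos P real)
    qed (use fin in \<open>auto simp: P\<close>)
  qed
  moreover have "0 - (1 / \<tau>) *\<^sub>R p - (- (1 / \<tau>) *\<^sub>R z) = (1 / \<tau>) *\<^sub>R (z - p)"
    by (simp add: algebra_simps)
  ultimately show ?thesis by simp
qed

lemma prox_objective_minimiser_unique:
  fixes h :: "'a::real_inner \<Rightarrow> ereal"
  assumes \<tau>: "\<tau> > 0" and cv: "ext_convex h" and pr: "ext_proper h"
    and min1: "\<And>y. prox_objective \<tau> h z p1 \<le> prox_objective \<tau> h z y"
    and min2: "\<And>y. prox_objective \<tau> h z p2 \<le> prox_objective \<tau> h z y"
  shows "p1 = p2"
proof -
  have "0 \<le> ((1 / \<tau>) *\<^sub>R (z - p1) - (1 / \<tau>) *\<^sub>R (z - p2)) \<bullet> (p1 - p2)"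
    by (rule subdiff_monotone[OF pr prox_objective_minimiser_subdiff[OF \<tau> cv pr min1]
          prox_objective_minimiser_subdiff[OF \<tau> cv pr min2]])
  also have "\<dots> = - (1 / \<tau>) * ((p1 - p2) \<bullet> (p1 - p2))"
    by (simp add: algebra_simps inner_diff_left inner_diff_right inner_commute)
  finally have "(p1 - p2) \<bullet> (p1 - p2) / \<tau> \<le> 0" by simp
  then have "(p1 - p2) \<bullet> (p1 - p2) \<le> 0" using \<tau> by (simp add: divide_le_0_iff)
  then show ?thesis by (metis inner_eq_zero_iff inner_ge_zero order_antisym right_minus_eq)
qed

lemma ext_closed_le_limit:
  assumes "ext_closed h" "p \<longlonglongrightarrow> l" "a \<longlonglongrightarrow> A" "\<And>n. h (p n) \<le> ereal (a n)"
  shows "h l \<le> ereal A"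
proof -
  have "(\<lambda>n. (p n, a n)) \<longlonglongrightarrow> (l, A)" by (intro tendsto_Pair assms(2,3))
  then have "(l, A) \<in> {(x, a::real). h x \<le> ereal a}"
    using closed_sequentially[OF assms(1)[unfolded ext_closed_def], of "\<lambda>n. (p n, a n)"] assms(4)
    by blast
  then show ?thesis by simp
qed

text \<open>The affine minorant given by a subgradient makes the objective coercive.\<close>

lemma prox_objective_coercive:
  fixes h :: "'a::real_inner \<Rightarrow> ereal"
  assumes \<tau>: "\<tau> > 0" and pr: "ext_proper h" and sub: "v0 \<in> subdiff h x0"
  obtains c C where "\<And>y. ereal (C + norm (y - c) ^ 2 / 2) \<le> prox_objective \<tau> h z y"
proof -
  obtain H0 where H0: "h x0 = ereal H0" using subdiff_imp_finite[OF pr sub] by (cases "h x0") auto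
  define c where "c = z - \<tau> *\<^sub>R v0"
  define C where "C = \<tau> * H0 + \<tau> * (v0 \<bullet> (z - x0)) - \<tau>\<^sup>2 * norm v0 ^ 2 / 2"
  have "ereal (C + norm (y - c) ^ 2 / 2) \<le> prox_objective \<tau> h z y" for y
  proof (cases "h y")
    case (real Y)
    have "h x0 + ereal (v0 \<bullet> (y - x0)) \<le> h y" using sub unfolding subdiff_def by blast
    then have "H0 + v0 \<bullet> (y - x0) \<le> Y" by (simp add: H0 real)
    have "y - c = (y - z) + \<tau> *\<^sub>R v0" by (simp add: c_def)
    then have n: "norm (y - c) ^ 2 = norm (y - z) ^ 2 + 2 * \<tau> * ((y - z) \<bullet> v0) + \<tau>\<^sup>2 * norm v0 ^ 2"
      by (simp only: power2_norm_add_scaleR)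
    have i: "v0 \<bullet> (y - x0) = v0 \<bullet> (z - x0) + (y - z) \<bullet> v0"
      by (simp add: inner_diff_left inner_diff_right inner_commute)
    have "C + norm (y - c) ^ 2 / 2 = \<tau> * (H0 + v0 \<bullet> (y - x0)) + norm (y - z) ^ 2 / 2"
      unfolding C_def n i by (simp add: algebra_simps add_divide_distrib diff_divide_distrib)
    also have "\<dots> \<le> \<tau> * Y + norm (y - z) ^ 2 / 2"
      using \<open>H0 + v0 \<bullet> (y - x0) \<le> Y\<close> \<tau> by simp
    finally show ?thesis by (simp add: prox_objective_def real)
  qed (use \<tau> pr in \<open>auto simp: prox_objective_def ext_proper_def\<close>)
  then show ?thesis by (rule that)
qed

lemma prox_objective_minimiser_exists:
  fixes h :: "'a::euclidean_space \<Rightarrow> ereal"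
  assumes \<tau>: "\<tau> > 0" and pr: "ext_proper h" and cl: "ext_closed h" and sub: "v0 \<in> subdiff h x0"
  shows "\<exists>p. \<forall>y. prox_objective \<tau> h z p \<le> prox_objective \<tau> h z y"
proof -
  obtain c C where lower: "\<And>y. ereal (C + norm (y - c) ^ 2 / 2) \<le> prox_objective \<tau> h z y"
    using prox_objective_coercive[OF \<tau> pr sub] by blast
  have fin: "h w > -\<infinity>" for w using pr unfolding ext_proper_def by auto
  define m where "m = (INF y. prox_objective \<tau> h z y)"
  obtain y1 where "h y1 < \<infinity>" using pr unfolding ext_proper_def by blast
  then have "prox_objective \<tau> h z y1 < \<infinity>" using fin[of y1] \<tau>
    by (cases "h y1") (auto simp: prox_objective_def)
  moreover have "m \<le> prox_objective \<tau> h z y1" unfolding m_def by (rule INF_lower) simp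
  moreover have "ereal C \<le> m"
    unfolding m_def
  proof (rule INF_greatest)
    fix y
    have "ereal C \<le> ereal (C + norm (y - c) ^ 2 / 2)" by simp
    also note lower[of y]
    finally show "ereal C \<le> prox_objective \<tau> h z y" .
  qed
  ultimately obtain M where M: "m = ereal M" by (cases m) auto
  have "\<exists>p. prox_objective \<tau> h z p < ereal (M + 1 / real (Suc n))" for n
  proof -
    have "m < ereal (M + 1 / real (Suc n))" using M by simp
    then show ?thesis unfolding m_def by (simp add: INF_less_iff)
  qed
  then obtain p where p: "\<And>n. prox_objective \<tau> h z (p n) < ereal (M + 1 / real (Suc n))" by metis
  define a where "a n = (M + 1 / real (Suc n) - norm (p n - z) ^ 2 / 2) / \<tau>" for n
  have epi: "h (p n) \<le> ereal (a n)" for n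
  proof (cases "h (p n)")
    case (real H)
    then have "H * \<tau> \<le> M + 1 / real (Suc n) - norm (p n - z) ^ 2 / 2"
      using p[of n] by (simp add: prox_objective_def mult.commute)
    then show ?thesis using \<tau> by (simp add: real a_def pos_le_divide_eq)
  qed (use p[of n] fin[of "p n"] \<tau> in \<open>auto simp: prox_objective_def\<close>)
  have bounded: "p n \<in> cball c (sqrt (2 * (M + 1 - C)))" for n
  proof -
    have "C + norm (p n - c) ^ 2 / 2 < M + 1 / real (Suc n)"
      using le_less_trans[OF lower p] by simp
    moreover have "1 / real (Suc n) \<le> 1" by simp
    ultimately have "C + norm (p n - c) ^ 2 / 2 \<le> M + 1" by linarith
    then have "norm (p n - c) ^ 2 \<le> 2 * (M + 1 - C)" by simp
    then show ?thesis by (simp add: dist_norm norm_minus_commute real_le_rsqrt)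
  qed
  then obtain l r where r: "strict_mono r" and lim: "(p \<circ> r) \<longlonglongrightarrow> l"
    using compact_imp_seq_compact[OF compact_cball] bounded unfolding seq_compact_def by blast
  have "(\<lambda>n. 1 / real (Suc (r n))) \<longlonglongrightarrow> 0"
    using LIMSEQ_subseq_LIMSEQ[OF LIMSEQ_inverse_real_of_nat r] by (simp add: o_def inverse_eq_divide)
  then have "(\<lambda>n. a (r n)) \<longlonglongrightarrow> (M + 0 - norm (l - z) ^ 2 / 2) / \<tau>"
    unfolding a_def using lim \<tau> by (intro tendsto_intros) (auto simp: o_def)
  then have "h l \<le> ereal ((M - norm (l - z) ^ 2 / 2) / \<tau>)"
    using ext_closed_le_limit[OF cl lim[unfolded o_def]] epi by simp
  then have "prox_objective \<tau> h z l \<le> ereal \<tau> * ereal ((M - norm (l - z) ^ 2 / 2) / \<tau>) + ereal (norm (l - z) ^ 2 / 2)"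
    unfolding prox_objective_def using \<tau> by (intro add_right_mono ereal_mult_left_mono) auto
  also have "\<dots> = m" using \<tau> by (simp add: M)
  finally have "prox_objective \<tau> h z l \<le> m" .
  moreover have "m \<le> prox_objective \<tau> h z y" for y unfolding m_def by (rule INF_lower) simp
  ultimately show ?thesis by (meson order_trans)
qed

lemma prox_minimises:
  fixes h :: "'a::euclidean_space \<Rightarrow> ereal"
  assumes "\<tau> > 0" "ext_convex h" "ext_proper h" "ext_closed h" "v0 \<in> subdiff h x0"
  shows "prox_objective \<tau> h z (prox \<tau> h z) \<le> prox_objective \<tau> h z y"
proof -
  have "\<exists>!p. \<forall>y. prox_objective \<tau> h z p \<le> prox_objective \<tau> h z y"
    using prox_objective_minimiser_exists[OF assms(1,3-5)]
      prox_objective_minimiser_unique[OF assms(1-3)] by blast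
  from theI'[OF this] show ?thesis
    unfolding prox_def prox_objective_def by simp
qed

lemma prox_subdiff:
  fixes h :: "'a::euclidean_space \<Rightarrow> ereal"
  assumes "\<tau> > 0" "ext_convex h" "ext_proper h" "ext_closed h" "v0 \<in> subdiff h x0"
  shows "(1 / \<tau>) *\<^sub>R (z - prox \<tau> h z) \<in> subdiff h (prox \<tau> h z)"
  by (rule prox_objective_minimiser_subdiff[OF assms(1-3) prox_minimises[OF assms]])

lemma prox_nonexpansive:
  fixes h :: "'a::euclidean_space \<Rightarrow> ereal"
  assumes \<tau>: "\<tau> > 0" and "ext_convex h" "ext_proper h" "ext_closed h" "v0 \<in> subdiff h x0"
  shows "1-lipschitz_on UNIV (prox \<tau> h)"
proof (rule lipschitz_onI)
  fix z1 z2
  define p1 where "p1 = prox \<tau> h z1"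
  define p2 where "p2 = prox \<tau> h z2"
  have "0 \<le> ((1 / \<tau>) *\<^sub>R (z1 - p1) - (1 / \<tau>) *\<^sub>R (z2 - p2)) \<bullet> (p1 - p2)"
    unfolding p1_def p2_def by (rule subdiff_monotone[OF assms(3) prox_subdiff[OF assms] prox_subdiff[OF assms]])
  also have "\<dots> = (1 / \<tau>) * ((z1 - z2) \<bullet> (p1 - p2) - (p1 - p2) \<bullet> (p1 - p2))"
    by (simp add: algebra_simps inner_diff_left inner_diff_right)
  finally have "(p1 - p2) \<bullet> (p1 - p2) \<le> (z1 - z2) \<bullet> (p1 - p2)"
    using \<tau> by (simp add: zero_le_divide_iff)
  also have "\<dots> \<le> norm (z1 - z2) * norm (p1 - p2)" by (rule norm_cauchy_schwarz)
  finally have "norm (p1 - p2) * norm (p1 - p2) \<le> norm (z1 - z2) * norm (p1 - p2)"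
    by (simp add: power2_norm_eq_inner[symmetric] power2_eq_square)
  then show "dist (prox \<tau> h z1) (prox \<tau> h z2) \<le> 1 * dist z1 z2"
    unfolding p1_def[symmetric] p2_def[symmetric] dist_norm
    by (cases "norm (p1 - p2) = 0") (auto simp: mult_le_cancel_right)
qed simp

lemma fenchel_young: "ereal (w \<bullet> p) - h p \<le> conjugate h w"
  unfolding conjugate_def by (rule SUP_upper) simp

lemma conjugate_eq_at_subdiff:
  assumes pr: "ext_proper h" and sub: "v \<in> subdiff h p"
  shows "conjugate h v = ereal (v \<bullet> p) - h p"
proof (rule antisym)
  obtain P where P: "h p = ereal P" using subdiff_imp_finite[OF pr sub] by (cases "h p") auto
  show "conjugate h v \<le> ereal (v \<bullet> p) - h p"
    unfolding conjugate_def
  proof (rule SUP_least)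
    fix x
    have le: "h p + ereal (v \<bullet> (x - p)) \<le> h x" using sub unfolding subdiff_def by blast
    show "ereal (v \<bullet> x) - h x \<le> ereal (v \<bullet> p) - h p"
    proof (cases "h x")
      case (real X)
      with le P have "P + v \<bullet> (x - p) \<le> X" by simp
      then show ?thesis using real P by (simp add: inner_diff_right)
    qed (use pr in \<open>auto simp: ext_proper_def\<close>)
  qed
qed (rule fenchel_young)

text \<open>Since p \<in> \<partial>h* v whenever v \<in> \<partial>h p, strong convexity of h* makes the inverse of \<partial>h strongly
  monotone. The subgradient of h* - \<mu>/2 |.|^2 at v is obtained from the Fenchel-Young inequality and
  the sum rule for quadratics.\<close>

lemma strongly_convex_conjugate_subdiff_monotone:
  fixes h :: "'a::real_inner \<Rightarrow> ereal"
  assumes strong: "ext_strongly_convex \<mu> (conjugate h)" and pr: "ext_proper h"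
    and s1: "v1 \<in> subdiff h p1" and s2: "v2 \<in> subdiff h p2"
  shows "\<mu> * norm (v1 - v2) ^ 2 \<le> (p1 - p2) \<bullet> (v1 - v2)"
proof -
  define k where "k w = conjugate h w - ereal (\<mu> / 2 * norm w ^ 2)" for w
  have cv: "ext_convex k" using strong unfolding ext_strongly_convex_def k_def[abs_def] .
  obtain P1 where P1: "h p1 = ereal P1" using subdiff_imp_finite[OF pr s1] by (cases "h p1") auto
  have conj_fin: "conjugate h w > -\<infinity>" for w
    using fenchel_young[of w p1 h] P1 by auto
  have k_fin: "k w > -\<infinity>" for w
    using conj_fin[of w] unfolding k_def by (cases "conjugate h w") auto
  have k_subdiff: "p - \<mu> *\<^sub>R v - 0 \<in> subdiff k v"
    and k_at: "k v = ereal (v \<bullet> p - P - \<mu> / 2 * norm v ^ 2)"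
    if sub: "v \<in> subdiff h p" and hp: "h p = ereal P" for v p P
  proof -
    have cv0: "conjugate h v = ereal (v \<bullet> p - P)"
      using conjugate_eq_at_subdiff[OF pr sub] hp by simp
    then show "k v = ereal (v \<bullet> p - P - \<mu> / 2 * norm v ^ 2)" by (simp add: k_def)
    show "p - \<mu> *\<^sub>R v - 0 \<in> subdiff k v"
    proof (rule ext_convex_subdiff_add_quadratic[OF cv k_fin])
      show "k v \<noteq> \<infinity>" using cv0 by (simp add: k_def)
      fix w
      have "ereal (v \<bullet> p - P + p \<bullet> (w - v)) \<le> conjugate h w"
        using fenchel_young[of w p h] hp by (simp add: inner_diff_right inner_commute)
      then show "k v + ereal (\<mu> / 2 * (norm v)\<^sup>2 + 0 \<bullet> v + p \<bullet> (w - v))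
          \<le> k w + ereal (\<mu> / 2 * (norm w)\<^sup>2 + 0 \<bullet> w)"
        using conj_fin[of w] by (cases "conjugate h w") (auto simp: k_def cv0)
    qed
  qed
  obtain P2 where P2: "h p2 = ereal P2" using subdiff_imp_finite[OF pr s2] by (cases "h p2") auto
  have "ext_proper k"
    unfolding ext_proper_def using k_fin k_at[OF s1 P1] by (metis less_ereal.simps(4))
  then have "0 \<le> ((p1 - \<mu> *\<^sub>R v1 - 0) - (p2 - \<mu> *\<^sub>R v2 - 0)) \<bullet> (v1 - v2)"
    using k_subdiff[OF s1 P1] k_subdiff[OF s2 P2] by (rule subdiff_monotone)
  also have "\<dots> = (p1 - p2) \<bullet> (v1 - v2) - \<mu> * ((v1 - v2) \<bullet> (v1 - v2))"
    by (simp add: inner_diff_left inner_diff_right inner_commute algebra_simps)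
  finally show ?thesis by (simp add: power2_norm_eq_inner)
qed

section \<open>One step of RandProx-FB\<close>

lemma weighted_power2_norm_shift:
  fixes X U e :: "'a::real_inner"
  shows "(1 / \<gamma>) * norm (X - s *\<^sub>R e) ^ 2 + C * norm (U + t *\<^sub>R e) ^ 2
       = (1 / \<gamma>) * norm X ^ 2 + C * norm U ^ 2 + ((- (2 * s / \<gamma>)) *\<^sub>R X + (2 * C * t) *\<^sub>R U) \<bullet> e
         + (s\<^sup>2 / \<gamma> + C * t\<^sup>2) * norm e ^ 2"
proof -
  have 1: "norm (X - s *\<^sub>R e) ^ 2 = norm X ^ 2 + 2 * (- s) * (X \<bullet> e) + (- s)\<^sup>2 * norm e ^ 2"
    using power2_norm_add_scaleR[of X "- s" e] by simp
  have 2: "((- (2 * s / \<gamma>)) *\<^sub>R X + (2 * C * t) *\<^sub>R U) \<bullet> e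
      = - (2 * s / \<gamma>) * (X \<bullet> e) + 2 * C * t * (U \<bullet> e)"
    by (simp only: inner_add_left inner_scaleR_left)
  show ?thesis
    unfolding 1 2 power2_norm_add_scaleR by (simp add: algebra_simps add_divide_distrib diff_divide_distrib)
qed

text \<open>In the application a = u - u*, b = v - u* for the subgradient v produced by the prox step, z is
  the difference of the gradient steps at x and x*, and the bracket on the right is the defect of the
  strong monotonicity of the inverse of the subdifferential of h.\<close>

lemma rpfb_lyapunov_identity:
  fixes z a b :: "'a::real_inner" and \<gamma> \<omega> \<mu> :: real
  assumes \<gamma>: "\<gamma> > 0" and \<omega>: "\<omega> \<ge> 0"
  defines "C \<equiv> (1 + \<omega>) * (\<gamma> * (1 + \<omega>) + 2 * \<mu>)"
  shows "(1 / \<gamma>) * norm (z - \<gamma> *\<^sub>R b) ^ 2 + C * norm ((1 / (1 + \<omega>)) *\<^sub>R (\<omega> *\<^sub>R a + b)) ^ 2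
          + ((1 / (1 + \<omega>))\<^sup>2 / \<gamma> + C * (1 / (\<gamma> * (1 + \<omega>)\<^sup>2))\<^sup>2) * \<omega> * norm ((\<gamma> * (1 + \<omega>)) *\<^sub>R (b - a)) ^ 2
        = (1 / \<gamma>) * norm z ^ 2 + (C - \<gamma> - 2 * \<mu>) * norm a ^ 2
          - 2 * ((z + (\<gamma> * \<omega>) *\<^sub>R a - (\<gamma> * (1 + \<omega>)) *\<^sub>R b) \<bullet> b - \<mu> * norm b ^ 2)"
proof -
  have real_identity:
    "(1 / \<gamma>) * (Z - 2 * \<gamma> * zb + \<gamma>\<^sup>2 * B) + C * ((1 / (1 + \<omega>))\<^sup>2 * (\<omega>\<^sup>2 * A + 2 * \<omega> * ab + B))
      + ((1 / (1 + \<omega>))\<^sup>2 / \<gamma> + C * (1 / (\<gamma> * (1 + \<omega>)\<^sup>2))\<^sup>2) * \<omega> * (\<gamma>\<^sup>2 * (1 + \<omega>)\<^sup>2 * (B - 2 * ab + A))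
     = (1 / \<gamma>) * Z + (C - \<gamma> - 2 * \<mu>) * A - 2 * ((zb + \<gamma> * \<omega> * ab - \<gamma> * (1 + \<omega>) * B) - \<mu> * B)"
    for Z A B zb ab :: real
  proof -
    \<comment> \<open>field_simps needs 1 + \<omega> as a single atom to know that it is nonzero\<close>
    obtain q where q: "q > 0" "\<omega> = q - 1" using \<omega> by (intro that[of "1 + \<omega>"]) auto
    have K: "((1 / q)\<^sup>2 / \<gamma> + q * (\<gamma> * q + 2 * \<mu>) * (1 / (\<gamma> * q\<^sup>2))\<^sup>2) * (\<gamma> * q)\<^sup>2
        = \<gamma> + (\<gamma> * q + 2 * \<mu>) / q"
      using \<gamma> q by (simp add: field_simps power2_eq_square)
    have "q * (\<gamma> * q + 2 * \<mu>) * ((1 / q)\<^sup>2 * ((q - 1)\<^sup>2 * A + 2 * (q - 1) * ab + B))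
        = (\<gamma> * q + 2 * \<mu>) * (((q - 1)\<^sup>2 * A + 2 * (q - 1) * ab + B) / q)"
      using q by (simp add: power2_eq_square)
    with \<gamma> q K show ?thesis
      unfolding C_def q(2) by (simp add: field_simps power2_eq_square)
  qed
  have n1: "norm (\<omega> *\<^sub>R a + b) ^ 2 = \<omega>\<^sup>2 * norm a ^ 2 + 2 * \<omega> * (a \<bullet> b) + norm b ^ 2"
    using power2_norm_add_scaleR[of b \<omega> a] by (simp add: inner_commute add.commute)
  have n2: "norm (b - a) ^ 2 = norm b ^ 2 - 2 * (a \<bullet> b) + norm a ^ 2"
    using power2_norm_add_scaleR[of b "- 1" a] by (simp add: inner_commute)
  have n3: "norm (z - \<gamma> *\<^sub>R b) ^ 2 = norm z ^ 2 - 2 * \<gamma> * (z \<bullet> b) + \<gamma>\<^sup>2 * norm b ^ 2"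
    using power2_norm_add_scaleR[of z "- \<gamma>" b] by simp
  have n4: "(z + (\<gamma> * \<omega>) *\<^sub>R a - (\<gamma> * (1 + \<omega>)) *\<^sub>R b) \<bullet> b
      = z \<bullet> b + \<gamma> * \<omega> * (a \<bullet> b) - \<gamma> * (1 + \<omega>) * norm b ^ 2"
    by (simp add: inner_add_left inner_diff_left power2_norm_eq_inner)
  show ?thesis
    unfolding n1 n2 n3 n4 norm_scaleR power_mult_distrib power2_abs by (rule real_identity)
qed

locale rpfb_setting =
  fixes f :: "'a::euclidean_space \<Rightarrow> real" and gradf :: "'a \<Rightarrow> 'a"
    and h :: "'a \<Rightarrow> ereal"
    and Lf \<mu>f \<mu>h \<gamma> \<omega> :: real and xs :: 'a
  assumes f_grad: "\<And>z. (f has_derivative (\<lambda>v. gradf z \<bullet> v)) (at z)"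
    and Lf_pos: "Lf > 0"
    and f_smooth: "Lf-lipschitz_on UNIV gradf"
    and f_strong: "convex_on UNIV (\<lambda>z. f z - \<mu>f / 2 * norm z ^ 2)"
    and muf_pos: "\<mu>f > 0"
    and h_proper: "ext_proper h" and h_closed: "ext_closed h" and h_convex: "ext_convex h"
    and muh: "\<mu>h \<ge> 0" and hstar_strong: "ext_strongly_convex \<mu>h (conjugate h)"
    and xs_opt: "- gradf xs \<in> subdiff h xs"
    and gamma_pos: "\<gamma> > 0" and gamma_lt: "\<gamma> < 2 / Lf"
    and omega_nonneg: "\<omega> \<ge> 0"
begin

abbreviation "xhat \<equiv> rpfb_xhat \<gamma> gradf"
abbreviation "res \<equiv> rpfb_r \<gamma> \<omega> h gradf"

definition "us = - gradf xs"
definition "u_weight = (1 + \<omega>) * (\<gamma> * (1 + \<omega>) + 2 * \<mu>h)"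
definition "rate = max (max ((1 - \<gamma> * \<mu>f)\<^sup>2) ((\<gamma> * Lf - 1)\<^sup>2))
                   (1 - (1 + 2 / \<gamma> * \<mu>h) / ((1 + \<omega>) * (1 + \<omega> + 2 / \<gamma> * \<mu>h)))"
definition "Psi x u = (1 / \<gamma>) * norm (x - xs) ^ 2 + (1 + \<omega>) * (\<gamma> * (1 + \<omega>) + 2 * \<mu>h) * norm (u - us) ^ 2"

text \<open>The iterates obtained when the random estimate d is replaced by its conditional mean res.\<close>

definition "x_mean x u = xhat x u - (1 / (1 + \<omega>)) *\<^sub>R res x u"
definition "u_mean x u = u + (1 / (\<gamma> * (1 + \<omega>)\<^sup>2)) *\<^sub>R res x u"

definition "noise_gain = (1 / (1 + \<omega>))\<^sup>2 / \<gamma> + u_weight * (1 / (\<gamma> * (1 + \<omega>)\<^sup>2))\<^sup>2"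
definition "noise_grad x u = (- (2 * (1 / (1 + \<omega>)) / \<gamma>)) *\<^sub>R (x_mean x u - xs)
    + (2 * u_weight * (1 / (\<gamma> * (1 + \<omega>)\<^sup>2))) *\<^sub>R (u_mean x u - us)"

lemma u_weight_pos: "u_weight > 0"
  unfolding u_weight_def using gamma_pos omega_nonneg muh by (intro mult_pos_pos add_pos_nonneg) auto

lemma noise_gain_nonneg: "noise_gain \<ge> 0"
  unfolding noise_gain_def using gamma_pos u_weight_pos by simp

lemma Psi_eq: "Psi x u = (1 / \<gamma>) * norm (x - xs) ^ 2 + u_weight * norm (u - us) ^ 2"
  unfolding Psi_def u_weight_def ..

lemma Psi_nonneg: "Psi x u \<ge> 0"
  unfolding Psi_eq using gamma_pos u_weight_pos by simp

lemma norm_x_le_Psi: "norm (x - xs) ^ 2 \<le> \<gamma> * Psi x u"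
  using gamma_pos u_weight_pos unfolding Psi_eq by (simp add: field_simps)

lemma norm_u_le_Psi: "norm (u - us) ^ 2 \<le> Psi x u / u_weight"
  using gamma_pos u_weight_pos unfolding Psi_eq by (simp add: field_simps)

lemma rate_nonneg: "0 \<le> rate"
  unfolding rate_def by (meson max.coboundedI1 zero_le_power2)

lemma rate_lt_1: "rate < 1"
proof -
  have sq_lt_1: "(1 - s)\<^sup>2 < 1" if "0 < s" "s < 2" for s :: real
  proof -
    have "(1 - s)\<^sup>2 = 1 - s * (2 - s)" by (simp add: power2_eq_square algebra_simps)
    with that show ?thesis by simp
  qed
  have "\<gamma> * Lf < 2" using gamma_lt Lf_pos by (simp add: field_simps)
  moreover have "\<gamma> * \<mu>f \<le> \<gamma> * Lf"
    using strong_convexity_le_lipschitz[OF f_grad f_smooth f_strong] gamma_pos by simp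
  ultimately have "\<gamma> * \<mu>f < 2" "\<gamma> * Lf < 2" by linarith+
  then have "(1 - \<gamma> * \<mu>f)\<^sup>2 < 1" "(1 - \<gamma> * Lf)\<^sup>2 < 1"
    using gamma_pos muf_pos Lf_pos by (auto intro!: sq_lt_1)
  moreover have "0 < (1 + 2 / \<gamma> * \<mu>h) / ((1 + \<omega>) * (1 + \<omega> + 2 / \<gamma> * \<mu>h))"
    using omega_nonneg gamma_pos muh by (intro divide_pos_pos mult_pos_pos add_pos_nonneg) auto
  ultimately show ?thesis
    unfolding rate_def by (simp add: power2_commute)
qed

lemma dual_rate_mult_u_weight:
  "(1 - (1 + 2 / \<gamma> * \<mu>h) / ((1 + \<omega>) * (1 + \<omega> + 2 / \<gamma> * \<mu>h))) * u_weight = u_weight - \<gamma> - 2 * \<mu>h"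
proof -
  have "(1 + 2 / \<gamma> * \<mu>h) / ((1 + \<omega>) * (1 + \<omega> + 2 / \<gamma> * \<mu>h))
      = (\<gamma> * (1 + 2 / \<gamma> * \<mu>h)) / ((1 + \<omega>) * (\<gamma> * (1 + \<omega> + 2 / \<gamma> * \<mu>h)))"
    using gamma_pos by simp
  also have "\<dots> = (\<gamma> + 2 * \<mu>h) / u_weight"
    using gamma_pos unfolding u_weight_def by (simp add: algebra_simps)
  finally show ?thesis
    using u_weight_pos by (simp add: field_simps)
qed

lemma Psi_step_decomposition:
  "Psi (xhat x u - (1 / (1 + \<omega>)) *\<^sub>R d) (u + (1 / (\<gamma> * (1 + \<omega>)\<^sup>2)) *\<^sub>R d)
   = Psi (x_mean x u) (u_mean x u) + noise_grad x u \<bullet> (d - res x u) + noise_gain * norm (d - res x u) ^ 2"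
proof -
  have 1: "xhat x u - (1 / (1 + \<omega>)) *\<^sub>R d - xs = (x_mean x u - xs) - (1 / (1 + \<omega>)) *\<^sub>R (d - res x u)"
    by (simp add: x_mean_def algebra_simps)
  have 2: "u + (1 / (\<gamma> * (1 + \<omega>)\<^sup>2)) *\<^sub>R d - us = (u_mean x u - us) + (1 / (\<gamma> * (1 + \<omega>)\<^sup>2)) *\<^sub>R (d - res x u)"
    by (simp add: u_mean_def algebra_simps)
  show ?thesis
    unfolding Psi_eq 1 2 weighted_power2_norm_shift noise_gain_def noise_grad_def ..
qed

lemma mean_step_subdiff_form:
  fixes x u :: 'a
  defines "z \<equiv> (x - \<gamma> *\<^sub>R gradf x) - (xs - \<gamma> *\<^sub>R gradf xs)"
  obtains p v where "v \<in> subdiff h p"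
    and "p - xs = z + (\<gamma> * \<omega>) *\<^sub>R (u - us) - (\<gamma> * (1 + \<omega>)) *\<^sub>R (v - us)"
    and "res x u = (\<gamma> * (1 + \<omega>)) *\<^sub>R ((v - us) - (u - us))"
    and "x_mean x u - xs = z - \<gamma> *\<^sub>R (v - us)"
    and "u_mean x u - us = (1 / (1 + \<omega>)) *\<^sub>R (\<omega> *\<^sub>R (u - us) + (v - us))"
proof -
  define \<tau> where "\<tau> = \<gamma> * (1 + \<omega>)"
  have \<tau>: "\<tau> > 0" unfolding \<tau>_def using gamma_pos omega_nonneg by simp
  define p where "p = prox \<tau> h (xhat x u + \<tau> *\<^sub>R u)"
  define v where "v = (1 / \<tau>) *\<^sub>R (xhat x u + \<tau> *\<^sub>R u - p)"
  have tv: "\<tau> *\<^sub>R v = xhat x u + \<tau> *\<^sub>R u - p"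
    using \<tau> by (simp add: v_def)
  have "\<tau> *\<^sub>R ((v - us) - (u - us)) = \<tau> *\<^sub>R v - \<tau> *\<^sub>R u"
    by (simp add: algebra_simps)
  then have res: "res x u = \<tau> *\<^sub>R ((v - us) - (u - us))"
    unfolding tv by (simp add: rpfb_r_def p_def \<tau>_def)
  have xhat: "xhat x u - xs = z - \<gamma> *\<^sub>R (u - us)"
    by (simp add: z_def rpfb_xhat_def us_def algebra_simps)
  show ?thesis
  proof
    show "v \<in> subdiff h p"
      unfolding v_def p_def by (rule prox_subdiff[OF \<tau> h_convex h_proper h_closed xs_opt])
    show "p - xs = z + (\<gamma> * \<omega>) *\<^sub>R (u - us) - (\<gamma> * (1 + \<omega>)) *\<^sub>R (v - us)"
      using xhat tv by (simp add: \<tau>_def algebra_simps)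
    show "res x u = (\<gamma> * (1 + \<omega>)) *\<^sub>R ((v - us) - (u - us))"
      using res by (simp add: \<tau>_def)
    show "x_mean x u - xs = z - \<gamma> *\<^sub>R (v - us)"
    proof -
      have "(1 / (1 + \<omega>)) *\<^sub>R res x u = \<gamma> *\<^sub>R ((v - us) - (u - us))"
        using res omega_nonneg by (simp add: \<tau>_def)
      then have "x_mean x u - xs = (z - \<gamma> *\<^sub>R (u - us)) - \<gamma> *\<^sub>R ((v - us) - (u - us))"
        unfolding xhat[symmetric] by (simp add: x_mean_def)
      then show ?thesis by (simp add: algebra_simps)
    qed
    show "u_mean x u - us = (1 / (1 + \<omega>)) *\<^sub>R (\<omega> *\<^sub>R (u - us) + (v - us))"
    proof -
      have "(1 / (\<gamma> * (1 + \<omega>)\<^sup>2)) *\<^sub>R res x u = (1 / (1 + \<omega>)) *\<^sub>R ((v - us) - (u - us))"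
        using res omega_nonneg gamma_pos by (simp add: \<tau>_def power2_eq_square)
      then have "u_mean x u - us = (u - us) + (1 / (1 + \<omega>)) *\<^sub>R ((v - us) - (u - us))"
        by (simp add: u_mean_def)
      also have "\<dots> = (1 / (1 + \<omega>)) *\<^sub>R ((1 + \<omega>) *\<^sub>R (u - us) + ((v - us) - (u - us)))"
        using omega_nonneg by (simp add: scaleR_add_right)
      also have "(1 + \<omega>) *\<^sub>R (u - us) + ((v - us) - (u - us)) = \<omega> *\<^sub>R (u - us) + (v - us)"
        by (simp add: algebra_simps)
      finally show ?thesis .
    qed
  qed
qed

lemma Psi_mean_contraction:
  "Psi (x_mean x u) (u_mean x u) + noise_gain * \<omega> * norm (res x u) ^ 2 \<le> rate * Psi x u"
proof -
  define z where "z = (x - \<gamma> *\<^sub>R gradf x) - (xs - \<gamma> *\<^sub>R gradf xs)"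
  obtain p v where v: "v \<in> subdiff h p"
    and p: "p - xs = z + (\<gamma> * \<omega>) *\<^sub>R (u - us) - (\<gamma> * (1 + \<omega>)) *\<^sub>R (v - us)"
    and res: "res x u = (\<gamma> * (1 + \<omega>)) *\<^sub>R ((v - us) - (u - us))"
    and x_mean: "x_mean x u - xs = z - \<gamma> *\<^sub>R (v - us)"
    and u_mean: "u_mean x u - us = (1 / (1 + \<omega>)) *\<^sub>R (\<omega> *\<^sub>R (u - us) + (v - us))"
    using mean_step_subdiff_form unfolding z_def by blast
  have mono: "\<mu>h * norm (v - us) ^ 2 \<le> (p - xs) \<bullet> (v - us)"
    using strongly_convex_conjugate_subdiff_monotone[OF hstar_strong h_proper v xs_opt]
    by (simp add: us_def)
  have z: "norm z ^ 2 \<le> rate * norm (x - xs) ^ 2"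
  proof -
    have "norm z ^ 2 \<le> max ((1 - \<gamma> * \<mu>f)\<^sup>2) ((\<gamma> * Lf - 1)\<^sup>2) * norm (x - xs) ^ 2"
      unfolding z_def by (rule gradient_step_contraction[OF f_grad f_smooth f_strong gamma_pos])
    also have "\<dots> \<le> rate * norm (x - xs) ^ 2"
      unfolding rate_def by (intro mult_right_mono) auto
    finally show ?thesis .
  qed
  have "Psi (x_mean x u) (u_mean x u) + noise_gain * \<omega> * norm (res x u) ^ 2
      = (1 / \<gamma>) * norm z ^ 2 + (u_weight - \<gamma> - 2 * \<mu>h) * norm (u - us) ^ 2
        - 2 * ((p - xs) \<bullet> (v - us) - \<mu>h * norm (v - us) ^ 2)"
    unfolding Psi_eq x_mean u_mean res noise_gain_def p u_weight_def
    by (rule rpfb_lyapunov_identity[OF gamma_pos omega_nonneg])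
  also have "\<dots> \<le> (1 / \<gamma>) * norm z ^ 2 + (u_weight - \<gamma> - 2 * \<mu>h) * norm (u - us) ^ 2"
    using mono by simp
  also have "\<dots> \<le> rate * ((1 / \<gamma>) * norm (x - xs) ^ 2) + rate * (u_weight * norm (u - us) ^ 2)"
  proof (rule add_mono)
    show "(1 / \<gamma>) * norm z ^ 2 \<le> rate * ((1 / \<gamma>) * norm (x - xs) ^ 2)"
      using z gamma_pos by (simp add: field_simps)
    have "u_weight - \<gamma> - 2 * \<mu>h \<le> rate * u_weight"
      unfolding dual_rate_mult_u_weight[symmetric] rate_def using u_weight_pos by (intro mult_right_mono) auto
    then show "(u_weight - \<gamma> - 2 * \<mu>h) * norm (u - us) ^ 2 \<le> rate * (u_weight * norm (u - us) ^ 2)"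
      unfolding mult.assoc[symmetric] by (intro mult_right_mono) auto
  qed
  also have "\<dots> = rate * Psi x u"
    unfolding Psi_eq by (simp add: distrib_left)
  finally show ?thesis .
qed

lemma Psi_mean_le: "Psi (x_mean x u) (u_mean x u) \<le> Psi x u"
proof -
  have "0 \<le> noise_gain * \<omega> * norm (res x u) ^ 2"
    using noise_gain_nonneg omega_nonneg by simp
  moreover have "rate * Psi x u \<le> Psi x u"
    using rate_lt_1 Psi_nonneg[of x u] by (simp add: mult_left_le_one_le rate_nonneg)
  ultimately show ?thesis using Psi_mean_contraction[of x u] by linarith
qed

lemma norm_x_mean_le_Psi: "norm (x_mean x u - xs) ^ 2 \<le> \<gamma> * Psi x u"
  using norm_x_le_Psi[of "x_mean x u" "u_mean x u"] Psi_mean_le[of x u] gamma_pos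
  by (meson order_trans mult_left_mono less_imp_le)

lemma norm_u_mean_le_Psi: "norm (u_mean x u - us) ^ 2 \<le> Psi x u / u_weight"
  using norm_u_le_Psi[of "u_mean x u" "x_mean x u"] Psi_mean_le[of x u] u_weight_pos
  by (meson order_trans divide_right_mono less_imp_le)

lemma res_norm_le_Psi:
  obtains \<kappa> where "\<And>x u. norm (res x u) ^ 2 \<le> \<kappa> * Psi x u"
proof
  fix x u
  define k where "k = \<gamma> * (1 + \<omega>)\<^sup>2"
  have k: "k > 0" unfolding k_def using gamma_pos omega_nonneg by simp
  have "(u_mean x u - us) + (- (u - us)) = (1 / k) *\<^sub>R res x u"
    by (simp add: u_mean_def k_def)
  then have "res x u = k *\<^sub>R ((u_mean x u - us) + (- (u - us)))"
    using k by simp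
  then have "norm (res x u) ^ 2 = k\<^sup>2 * norm ((u_mean x u - us) + (- (u - us))) ^ 2"
    by (simp add: power_mult_distrib)
  also have "\<dots> \<le> k\<^sup>2 * (2 * norm (u_mean x u - us) ^ 2 + 2 * norm (u - us) ^ 2)"
    using power2_norm_add_le[of "u_mean x u - us" "- (u - us)"] by (intro mult_left_mono) (auto simp: norm_minus_commute)
  also have "\<dots> \<le> k\<^sup>2 * (2 * (Psi x u / u_weight) + 2 * (Psi x u / u_weight))"
    using norm_u_mean_le_Psi[of x u] norm_u_le_Psi[of u x] by (intro mult_left_mono add_mono) auto
  also have "\<dots> = 4 * (\<gamma> * (1 + \<omega>)\<^sup>2)\<^sup>2 / u_weight * Psi x u"
    unfolding k_def by (simp add: field_simps)
  finally show "norm (res x u) ^ 2 \<le> 4 * (\<gamma> * (1 + \<omega>)\<^sup>2)\<^sup>2 / u_weight * Psi x u" .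
qed

lemma noise_grad_norm_le_Psi:
  obtains \<kappa> where "\<And>x u. norm (noise_grad x u) ^ 2 \<le> \<kappa> * Psi x u"
proof
  fix x u
  define \<alpha> where "\<alpha> = - (2 * (1 / (1 + \<omega>)) / \<gamma>)"
  define \<beta> where "\<beta> = 2 * u_weight * (1 / (\<gamma> * (1 + \<omega>)\<^sup>2))"
  have "norm (noise_grad x u) ^ 2
      \<le> 2 * norm (\<alpha> *\<^sub>R (x_mean x u - xs)) ^ 2 + 2 * norm (\<beta> *\<^sub>R (u_mean x u - us)) ^ 2"
    unfolding noise_grad_def \<alpha>_def \<beta>_def by (rule power2_norm_add_le)
  also have "\<dots> = 2 * \<alpha>\<^sup>2 * norm (x_mean x u - xs) ^ 2 + 2 * \<beta>\<^sup>2 * norm (u_mean x u - us) ^ 2"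
    by (simp add: power_mult_distrib)
  also have "\<dots> \<le> 2 * \<alpha>\<^sup>2 * (\<gamma> * Psi x u) + 2 * \<beta>\<^sup>2 * (Psi x u / u_weight)"
    using norm_x_mean_le_Psi[of x u] norm_u_mean_le_Psi[of x u] by (intro add_mono mult_left_mono) auto
  also have "\<dots> = (2 * \<alpha>\<^sup>2 * \<gamma> + 2 * \<beta>\<^sup>2 / u_weight) * Psi x u"
    by (simp add: algebra_simps)
  finally show "norm (noise_grad x u) ^ 2
      \<le> (2 * (- (2 * (1 / (1 + \<omega>)) / \<gamma>))\<^sup>2 * \<gamma> + 2 * (2 * u_weight * (1 / (\<gamma> * (1 + \<omega>)\<^sup>2)))\<^sup>2 / u_weight) * Psi x u"
    unfolding \<alpha>_def \<beta>_def .
qed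

lemma continuous_on_gradf [continuous_intros]:
  "continuous_on S g \<Longrightarrow> continuous_on S (\<lambda>p. gradf (g p))"
  using continuous_on_compose2[OF lipschitz_on_continuous_on[OF f_smooth]] by blast

lemma continuous_on_prox [continuous_intros]:
  "continuous_on S g \<Longrightarrow> continuous_on S (\<lambda>p. prox (\<gamma> * (1 + \<omega>)) h (g p))"
proof -
  have "\<gamma> * (1 + \<omega>) > 0" using gamma_pos omega_nonneg by simp
  from prox_nonexpansive[OF this h_convex h_proper h_closed xs_opt]
  show "continuous_on S g \<Longrightarrow> ?thesis"
    using continuous_on_compose2[OF lipschitz_on_continuous_on] by blast
qed

lemma borel_measurable_step_quantities:
  "(\<lambda>p. res (fst p) (snd p)) \<in> borel_measurable borel"
  "(\<lambda>p. Psi (fst p) (snd p)) \<in> borel_measurable borel"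
  "(\<lambda>p. Psi (x_mean (fst p) (snd p)) (u_mean (fst p) (snd p))) \<in> borel_measurable borel"
  "(\<lambda>p. noise_grad (fst p) (snd p)) \<in> borel_measurable borel"
  unfolding Psi_def noise_grad_def x_mean_def u_mean_def rpfb_r_def rpfb_xhat_def
  by (intro borel_measurable_continuous_onI continuous_intros)+

end

section \<open>Expectation of the Lyapunov function\<close>

lemma hist_algebra_subalgebra:
  fixes x u :: "nat \<Rightarrow> 'w \<Rightarrow> 'a::topological_space"
  assumes "\<And>i. (\<lambda>s. (x i s, u i s)) \<in> measurable M borel"
  shows "subalgebra M (hist_algebra M x u t)"
    and "(\<lambda>s. (x t s, u t s)) \<in> measurable (hist_algebra M x u t) borel"
proof -
  define G where "G = (\<Union>i\<le>t. {(\<lambda>s. (x i s, u i s)) -` A \<inter> space M | A. A \<in> sets borel})"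
  have GM: "G \<subseteq> sets M" unfolding G_def using measurable_sets[OF assms] by blast
  then have "G \<subseteq> Pow (space M)" using sets.sets_into_space by blast
  then have space: "space (hist_algebra M x u t) = space M"
    and sets: "sets (hist_algebra M x u t) = sigma_sets (space M) G"
    unfolding hist_algebra_def G_def[symmetric] by (simp_all add: space_measure_of_conv sets_measure_of)
  show "subalgebra M (hist_algebra M x u t)"
    unfolding subalgebra_def space sets using sets.sigma_sets_subset[OF GM] by simp
  show "(\<lambda>s. (x t s, u t s)) \<in> measurable (hist_algebra M x u t) borel"
  proof (rule measurableI)
    fix A :: "('a \<times> 'a) set" assume "A \<in> sets borel"
    then have "(\<lambda>s. (x t s, u t s)) -` A \<inter> space M \<in> G" unfolding G_def by blast
    then show "(\<lambda>s. (x t s, u t s)) -` A \<inter> space (hist_algebra M x u t) \<in> sets (hist_algebra M x u t)"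
      unfolding space sets by (rule sigma_sets.Basic)
  qed simp
qed

lemma integrable_inner_Basis_mult:
  fixes X Y :: "'w \<Rightarrow> 'a::euclidean_space"
  assumes "X \<in> borel_measurable M" "Y \<in> borel_measurable M"
    and "integrable M (\<lambda>s. norm (X s) ^ 2)" "integrable M (\<lambda>s. norm (Y s) ^ 2)" and b: "b \<in> Basis"
  shows "integrable M (\<lambda>s. (X s \<bullet> b) * (Y s \<bullet> b))"
proof (rule Bochner_Integration.integrable_bound)
  show "integrable M (\<lambda>s. norm (X s) ^ 2 + norm (Y s) ^ 2)" using assms by simp
  show "(\<lambda>s. (X s \<bullet> b) * (Y s \<bullet> b)) \<in> borel_measurable M" using assms by measurable
  show "AE s in M. norm ((X s \<bullet> b) * (Y s \<bullet> b)) \<le> norm (norm (X s) ^ 2 + norm (Y s) ^ 2)"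
  proof (intro AE_I2)
    fix s
    have "\<bar>X s \<bullet> b\<bar> \<le> norm (X s)" "\<bar>Y s \<bullet> b\<bar> \<le> norm (Y s)" using Basis_le_norm[OF b] by auto
    then have "\<bar>(X s \<bullet> b) * (Y s \<bullet> b)\<bar> \<le> norm (X s) * norm (Y s)"
      by (simp add: abs_mult mult_mono)
    also have "\<dots> \<le> norm (X s) ^ 2 + norm (Y s) ^ 2"
    proof -
      have "0 \<le> norm (X s) * norm (Y s)" by simp
      moreover have "2 * (norm (X s) * norm (Y s)) \<le> norm (X s) ^ 2 + norm (Y s) ^ 2"
        using sum_squares_bound[of "norm (X s)" "norm (Y s)"] by (simp add: power2_eq_square mult.assoc)
      ultimately show ?thesis by linarith
    qed
    finally show "norm ((X s \<bullet> b) * (Y s \<bullet> b)) \<le> norm (norm (X s) ^ 2 + norm (Y s) ^ 2)" by simp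
  qed
qed

context sigma_finite_subalgebra
begin

lemma nn_cond_exp_le_imp_integral_le:
  assumes f: "f \<in> borel_measurable M" "\<And>s. f s \<ge> 0"
    and g: "integrable M g" "\<And>s. g s \<ge> 0"
    and le: "AE s in M. nn_cond_exp M F (\<lambda>s. ennreal (f s)) s \<le> ennreal (g s)"
  shows "integrable M f" and "(\<integral>s. f s \<partial>M) \<le> (\<integral>s. g s \<partial>M)"
proof -
  have "(\<integral>\<^sup>+ s. ennreal (f s) \<partial>M) = (\<integral>\<^sup>+ s. 1 * nn_cond_exp M F (\<lambda>s. ennreal (f s)) s \<partial>M)"
    using nn_cond_exp_intg[of "\<lambda>_. 1" "\<lambda>s. ennreal (f s)"] f by simp
  also have "\<dots> \<le> (\<integral>\<^sup>+ s. ennreal (g s) \<partial>M)"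
    using le by (intro nn_integral_mono_AE) auto
  also have "\<dots> = ennreal (\<integral>s. g s \<partial>M)"
    using g by (intro nn_integral_eq_integral) auto
  finally have nn: "(\<integral>\<^sup>+ s. ennreal (f s) \<partial>M) \<le> ennreal (\<integral>s. g s \<partial>M)" .
  then show int_f: "integrable M f"
    using f by (intro integrableI_nonneg) (auto simp: top.not_eq_extremum intro: le_less_trans)
  have "ennreal (\<integral>s. f s \<partial>M) \<le> ennreal (\<integral>s. g s \<partial>M)"
    using nn int_f f by (simp add: nn_integral_eq_integral)
  then show "(\<integral>s. f s \<partial>M) \<le> (\<integral>s. g s \<partial>M)"
    using g by (simp add: ennreal_le_iff integral_nonneg_AE)
qed

text \<open>Unbiasedness is only assumed coordinatewise, so the tower property is applied to each coordinate.\<close>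

lemma integral_inner_centered_eq_0:
  fixes G d R :: "'a \<Rightarrow> 'b::euclidean_space"
  assumes [measurable]: "G \<in> borel_measurable F" "d \<in> borel_measurable M" "R \<in> borel_measurable M"
    and int: "integrable M (\<lambda>s. norm (G s) ^ 2)" "integrable M (\<lambda>s. norm (R s) ^ 2)"
      "integrable M (\<lambda>s. norm (d s - R s) ^ 2)"
    and unbiased: "\<And>b. b \<in> Basis \<Longrightarrow> AE s in M. real_cond_exp M F (\<lambda>s. d s \<bullet> b) s = R s \<bullet> b"
  shows "integrable M (\<lambda>s. G s \<bullet> (d s - R s))" and "(\<integral>s. G s \<bullet> (d s - R s) \<partial>M) = 0"
proof -
  have [measurable]: "G \<in> borel_measurable M" by (rule measurable_from_subalg[OF subalg]) measurable
  have component: "integrable M (\<lambda>s. (G s \<bullet> b) * ((d s - R s) \<bullet> b))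
      \<and> (\<integral>s. (G s \<bullet> b) * ((d s - R s) \<bullet> b) \<partial>M) = 0" if b: "b \<in> Basis" for b
  proof -
    have int_GE: "integrable M (\<lambda>s. (G s \<bullet> b) * ((d s - R s) \<bullet> b))"
      and int_GR: "integrable M (\<lambda>s. (G s \<bullet> b) * (R s \<bullet> b))"
      by (rule integrable_inner_Basis_mult; use int b in measurable)+
    then have int_Gd: "integrable M (\<lambda>s. (G s \<bullet> b) * (d s \<bullet> b))"
      using Bochner_Integration.integrable_add[OF int_GE int_GR]
      by (simp add: inner_diff_left algebra_simps)
    have "(\<integral>s. (G s \<bullet> b) * (d s \<bullet> b) \<partial>M) = (\<integral>s. (G s \<bullet> b) * real_cond_exp M F (\<lambda>s. d s \<bullet> b) s \<partial>M)"
      by (rule real_cond_exp_intg(2)[symmetric]) (use int_Gd in measurable)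
    also have "\<dots> = (\<integral>s. (G s \<bullet> b) * (R s \<bullet> b) \<partial>M)"
      using unbiased[OF b] by (intro integral_cong_AE) (auto, measurable)
    finally have "(\<integral>s. (G s \<bullet> b) * ((d s - R s) \<bullet> b) \<partial>M) = 0"
      using int_Gd int_GR by (simp add: inner_diff_left right_diff_distrib)
    with int_GE show ?thesis ..
  qed
  have "G s \<bullet> (d s - R s) = (\<Sum>b\<in>Basis. (G s \<bullet> b) * ((d s - R s) \<bullet> b))" for s
    by (rule euclidean_inner)
  then show "integrable M (\<lambda>s. G s \<bullet> (d s - R s))" and "(\<integral>s. G s \<bullet> (d s - R s) \<partial>M) = 0"
    using component by simp_all
qed

end

section \<open>Almost sure convergence\<close>

lemma AE_tendsto_0_if_nn_integral_geometric:
  fixes Y :: "nat \<Rightarrow> 'w \<Rightarrow> real"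
  assumes meas: "\<And>t. Y t \<in> borel_measurable M" and nonneg: "\<And>t s. Y t s \<ge> 0"
    and c: "0 \<le> c" "c < 1" and B: "B \<ge> 0"
    and bound: "\<And>t. (\<integral>\<^sup>+ s. ennreal (Y t s) \<partial>M) \<le> ennreal (c ^ t * B)"
  shows "AE s in M. (\<lambda>t. Y t s) \<longlonglongrightarrow> 0"
proof -
  have "(\<integral>\<^sup>+ s. (\<Sum>t. ennreal (Y t s)) \<partial>M) = (\<Sum>t. \<integral>\<^sup>+ s. ennreal (Y t s) \<partial>M)"
    by (rule nn_integral_suminf) (use meas in measurable)
  also have "\<dots> \<le> (\<Sum>t. ennreal (c ^ t * B))"
    by (intro suminf_le bound) auto
  also have "\<dots> = ennreal (1 / (1 - c) * B)"
    by (rule suminf_ennreal_eq) (use sums_mult2[OF geometric_sums[of c]] c B in auto)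
  also have "\<dots> < \<infinity>" by simp
  finally have "(\<integral>\<^sup>+ s. (\<Sum>t. ennreal (Y t s)) \<partial>M) \<noteq> \<infinity>" by simp
  then have "AE s in M. (\<Sum>t. ennreal (Y t s)) \<noteq> \<infinity>"
    by (intro nn_integral_PInf_AE) (use meas in measurable)
  then show ?thesis
  proof eventually_elim
    case (elim s)
    then have "summable (\<lambda>t. Y t s)"
      using nonneg by (intro summable_suminf_not_top) auto
    then show ?case by (rule summable_LIMSEQ_zero)
  qed
qed

lemma tendsto_if_norm_sq_le:
  fixes X :: "nat \<Rightarrow> 'a::real_normed_vector"
  assumes "\<And>t. norm (X t - l) ^ 2 \<le> k * P t" and "P \<longlonglongrightarrow> 0"
  shows "X \<longlonglongrightarrow> l"
proof -
  have "(\<lambda>t. k * P t) \<longlonglongrightarrow> 0" using tendsto_mult_right_zero[OF assms(2)] by simp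
  have "(\<lambda>t. norm (X t - l) ^ 2) \<longlonglongrightarrow> 0"
    by (rule tendsto_sandwich[of "\<lambda>_. 0" _ _ "\<lambda>t. k * P t"]) (use assms \<open>(\<lambda>t. k * P t) \<longlonglongrightarrow> 0\<close> in auto)
  then have "(\<lambda>t. sqrt (norm (X t - l) ^ 2)) \<longlonglongrightarrow> sqrt 0" by (rule tendsto_real_sqrt)
  then show ?thesis by (simp add: tendsto_norm_zero_iff LIM_zero_iff)
qed

locale rpfb_process = rpfb_setting f gradf h Lf \<mu>f \<mu>h \<gamma> \<omega> xs
  for f :: "'a::euclidean_space \<Rightarrow> real" and gradf h Lf \<mu>f \<mu>h \<gamma> \<omega> xs +
  fixes M :: "'w measure" and x u d :: "nat \<Rightarrow> 'w \<Rightarrow> 'a" and x0 u0 :: 'a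
  assumes prob: "prob_space M"
    and init: "\<And>s. s \<in> space M \<Longrightarrow> x 0 s = x0 \<and> u 0 s = u0"
    and step_u: "\<And>t s. s \<in> space M \<Longrightarrow> u (Suc t) s = u t s + (1 / (\<gamma> * (1 + \<omega>)\<^sup>2)) *\<^sub>R d t s"
    and step_x: "\<And>t s. s \<in> space M \<Longrightarrow> x (Suc t) s = xhat (x t s) (u t s) - (1 / (1 + \<omega>)) *\<^sub>R d t s"
    and d_meas: "\<And>t. d t \<in> borel_measurable M"
    and unbiased: "\<And>t b. b \<in> Basis \<Longrightarrow>
        AE s in M. real_cond_exp M (hist_algebra M x u t) (\<lambda>s. d t s \<bullet> b) s = res (x t s) (u t s) \<bullet> b"
    and variance: "\<And>t. AE s in M. nn_cond_exp M (hist_algebra M x u t)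
        (\<lambda>s. ennreal (norm (d t s - res (x t s) (u t s)) ^ 2)) s \<le> ennreal (\<omega> * norm (res (x t s) (u t s)) ^ 2)"
begin

lemma iterates_measurable: "(\<lambda>s. (x t s, u t s)) \<in> measurable M borel"
proof -
  have gradf_meas [measurable]: "gradf \<in> borel_measurable borel"
    by (rule borel_measurable_continuous_onI[OF lipschitz_on_continuous_on[OF f_smooth]])
  have "x t \<in> borel_measurable M \<and> u t \<in> borel_measurable M"
  proof (induction t)
    case 0
    have "x 0 \<in> borel_measurable M \<longleftrightarrow> (\<lambda>_. x0) \<in> borel_measurable M"
      and "u 0 \<in> borel_measurable M \<longleftrightarrow> (\<lambda>_. u0) \<in> borel_measurable M"
      by (rule measurable_cong; use init in simp)+
    then show ?case by simp
  next
    case (Suc t)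
    then have [measurable]: "x t \<in> borel_measurable M" "u t \<in> borel_measurable M" by auto
    have [measurable]: "d t \<in> borel_measurable M" by (rule d_meas)
    have "x (Suc t) \<in> borel_measurable M \<longleftrightarrow>
        (\<lambda>s. x t s - \<gamma> *\<^sub>R gradf (x t s) - \<gamma> *\<^sub>R u t s - (1 / (1 + \<omega>)) *\<^sub>R d t s) \<in> borel_measurable M"
      and "u (Suc t) \<in> borel_measurable M \<longleftrightarrow>
        (\<lambda>s. u t s + (1 / (\<gamma> * (1 + \<omega>)\<^sup>2)) *\<^sub>R d t s) \<in> borel_measurable M"
      by (rule measurable_cong; simp add: step_x step_u rpfb_xhat_def)+
    then show ?case by simp
  qed
  then have "(\<lambda>s. (x t s, u t s)) \<in> measurable M (borel \<Otimes>\<^sub>M borel)"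
    by (intro measurable_Pair) auto
  then show ?thesis by (simp add: borel_prod)
qed

lemma step_quantities_measurable:
  "(\<lambda>s. res (x t s) (u t s)) \<in> borel_measurable M"
  "(\<lambda>s. Psi (x t s) (u t s)) \<in> borel_measurable M"
  "(\<lambda>s. Psi (x_mean (x t s) (u t s)) (u_mean (x t s) (u t s))) \<in> borel_measurable M"
  "(\<lambda>s. noise_grad (x t s) (u t s)) \<in> borel_measurable (hist_algebra M x u t)"
  using measurable_compose[OF iterates_measurable borel_measurable_step_quantities(1)]
    measurable_compose[OF iterates_measurable borel_measurable_step_quantities(2)]
    measurable_compose[OF iterates_measurable borel_measurable_step_quantities(3)]
    measurable_compose[OF hist_algebra_subalgebra(2)[OF iterates_measurable] borel_measurable_step_quantities(4)]
  by simp_all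

lemma square_integrable_step_quantities:
  assumes int: "integrable M (\<lambda>s. Psi (x t s) (u t s))"
  shows "integrable M (\<lambda>s. norm (res (x t s) (u t s)) ^ 2)"
    and "integrable M (\<lambda>s. norm (noise_grad (x t s) (u t s)) ^ 2)"
    and "integrable M (\<lambda>s. Psi (x_mean (x t s) (u t s)) (u_mean (x t s) (u t s)))"
proof -
  have [measurable]: "(\<lambda>s. res (x t s) (u t s)) \<in> borel_measurable M"
    "(\<lambda>s. Psi (x_mean (x t s) (u t s)) (u_mean (x t s) (u t s))) \<in> borel_measurable M"
    "(\<lambda>s. noise_grad (x t s) (u t s)) \<in> borel_measurable M"
    using step_quantities_measurable[of t]
      measurable_from_subalg[OF hist_algebra_subalgebra(1)[OF iterates_measurable] step_quantities_measurable(4)]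
    by blast+
  obtain \<kappa>r where \<kappa>r: "\<And>x u. norm (res x u) ^ 2 \<le> \<kappa>r * Psi x u" using res_norm_le_Psi by blast
  obtain \<kappa>g where \<kappa>g: "\<And>x u. norm (noise_grad x u) ^ 2 \<le> \<kappa>g * Psi x u" using noise_grad_norm_le_Psi by blast
  show "integrable M (\<lambda>s. norm (res (x t s) (u t s)) ^ 2)"
  proof (rule Bochner_Integration.integrable_bound)
    show "integrable M (\<lambda>s. \<kappa>r * Psi (x t s) (u t s))" using int by simp
    show "AE s in M. norm (norm (res (x t s) (u t s)) ^ 2) \<le> norm (\<kappa>r * Psi (x t s) (u t s))"
      using \<kappa>r by (auto intro: order_trans[OF _ abs_ge_self])
  qed measurable
  show "integrable M (\<lambda>s. norm (noise_grad (x t s) (u t s)) ^ 2)"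
  proof (rule Bochner_Integration.integrable_bound)
    show "integrable M (\<lambda>s. \<kappa>g * Psi (x t s) (u t s))" using int by simp
    show "AE s in M. norm (norm (noise_grad (x t s) (u t s)) ^ 2) \<le> norm (\<kappa>g * Psi (x t s) (u t s))"
      using \<kappa>g by (auto intro: order_trans[OF _ abs_ge_self])
  qed measurable
  show "integrable M (\<lambda>s. Psi (x_mean (x t s) (u t s)) (u_mean (x t s) (u t s)))"
  proof (rule Bochner_Integration.integrable_bound[OF int])
    show "AE s in M. norm (Psi (x_mean (x t s) (u t s)) (u_mean (x t s) (u t s))) \<le> norm (Psi (x t s) (u t s))"
      using Psi_mean_le Psi_nonneg by auto
  qed measurable
qed

lemma expectation_step:
  assumes int: "integrable M (\<lambda>s. Psi (x t s) (u t s))"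
  shows "integrable M (\<lambda>s. Psi (x (Suc t) s) (u (Suc t) s))"
    and "(\<integral>s. Psi (x (Suc t) s) (u (Suc t) s) \<partial>M) \<le> rate * (\<integral>s. Psi (x t s) (u t s) \<partial>M)"
proof -
  interpret prob_space M by (rule prob)
  define F where "F = hist_algebra M x u t"
  interpret finite_measure_subalgebra M F
    unfolding F_def by unfold_locales (rule hist_algebra_subalgebra(1)[OF iterates_measurable])
  define R where "R s = res (x t s) (u t s)" for s
  define G where "G s = noise_grad (x t s) (u t s)" for s
  define P where "P s = Psi (x_mean (x t s) (u t s)) (u_mean (x t s) (u t s))" for s
  define E where "E s = d t s - R s" for s
  have [measurable]: "R \<in> borel_measurable M" "G \<in> borel_measurable F" "d t \<in> borel_measurable M"
    unfolding R_def G_def F_def using d_meas step_quantities_measurable by blast+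
  have [measurable]: "E \<in> borel_measurable M" unfolding E_def by measurable
  have int_R: "integrable M (\<lambda>s. norm (R s) ^ 2)" and int_G: "integrable M (\<lambda>s. norm (G s) ^ 2)"
    and int_P: "integrable M P"
    unfolding R_def G_def P_def by (rule square_integrable_step_quantities[OF int])+
  have var: "AE s in M. nn_cond_exp M F (\<lambda>s. ennreal (norm (E s) ^ 2)) s \<le> ennreal (\<omega> * norm (R s) ^ 2)"
    using variance[of t] unfolding F_def E_def R_def .
  have int_wR: "integrable M (\<lambda>s. \<omega> * norm (R s) ^ 2)" using int_R by simp
  have int_E: "integrable M (\<lambda>s. norm (E s) ^ 2)"
    and E_le: "(\<integral>s. norm (E s) ^ 2 \<partial>M) \<le> (\<integral>s. \<omega> * norm (R s) ^ 2 \<partial>M)"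
    using nn_cond_exp_le_imp_integral_le[OF _ _ int_wR _ var] omega_nonneg by auto
  have unbiased_t: "AE s in M. real_cond_exp M F (\<lambda>s. d t s \<bullet> b) s = R s \<bullet> b" if "b \<in> Basis" for b
    using unbiased[OF that, of t] unfolding F_def R_def .
  have int_GE: "integrable M (\<lambda>s. G s \<bullet> E s)" and GE_0: "(\<integral>s. G s \<bullet> E s \<partial>M) = 0"
    using integral_inner_centered_eq_0[of G "d t" R, OF _ _ _ int_G int_R _ unbiased_t] int_E
    unfolding E_def by auto
  have step: "Psi (x (Suc t) s) (u (Suc t) s) = P s + G s \<bullet> E s + noise_gain * norm (E s) ^ 2"
    if "s \<in> space M" for s
    unfolding step_x[OF that] step_u[OF that] Psi_step_decomposition P_def G_def E_def R_def ..
  have "integrable M (\<lambda>s. P s + G s \<bullet> E s + noise_gain * norm (E s) ^ 2)"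
    using int_P int_GE int_E by simp
  then show "integrable M (\<lambda>s. Psi (x (Suc t) s) (u (Suc t) s))"
    using Bochner_Integration.integrable_cong[of M M "\<lambda>s. Psi (x (Suc t) s) (u (Suc t) s)"
        "\<lambda>s. P s + G s \<bullet> E s + noise_gain * norm (E s) ^ 2"] step by simp
  have "(\<integral>s. Psi (x (Suc t) s) (u (Suc t) s) \<partial>M) = (\<integral>s. P s + G s \<bullet> E s + noise_gain * norm (E s) ^ 2 \<partial>M)"
    by (rule Bochner_Integration.integral_cong[OF refl step])
  also have "\<dots> = (\<integral>s. P s \<partial>M) + (\<integral>s. G s \<bullet> E s \<partial>M) + noise_gain * (\<integral>s. norm (E s) ^ 2 \<partial>M)"
    using int_P int_GE int_E by simp
  also have "\<dots> \<le> (\<integral>s. P s \<partial>M) + noise_gain * (\<integral>s. \<omega> * norm (R s) ^ 2 \<partial>M)"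
    unfolding GE_0 using E_le noise_gain_nonneg by (simp add: mult_left_mono)
  also have "\<dots> = (\<integral>s. P s + noise_gain * \<omega> * norm (R s) ^ 2 \<partial>M)"
    using int_P int_R by (simp add: mult.assoc)
  also have "\<dots> \<le> (\<integral>s. rate * Psi (x t s) (u t s) \<partial>M)"
    using int_P int_R int Psi_mean_contraction unfolding P_def R_def by (intro integral_mono) auto
  finally show "(\<integral>s. Psi (x (Suc t) s) (u (Suc t) s) \<partial>M) \<le> rate * (\<integral>s. Psi (x t s) (u t s) \<partial>M)"
    by simp
qed

lemma expectation_bound:
  "integrable M (\<lambda>s. Psi (x t s) (u t s)) \<and> (\<integral>s. Psi (x t s) (u t s) \<partial>M) \<le> rate ^ t * Psi x0 u0"
proof (induction t)
  case 0
  interpret prob_space M by (rule prob)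
  have "integrable M (\<lambda>s. Psi (x 0 s) (u 0 s)) \<longleftrightarrow> integrable M (\<lambda>s. Psi x0 u0)"
    by (rule Bochner_Integration.integrable_cong) (use init in auto)
  moreover have "(\<integral>s. Psi (x 0 s) (u 0 s) \<partial>M) = (\<integral>s. Psi x0 u0 \<partial>M)"
    by (rule Bochner_Integration.integral_cong) (use init in auto)
  ultimately show ?case by (simp add: prob_space)
next
  case (Suc t)
  then have "(\<integral>s. Psi (x (Suc t) s) (u (Suc t) s) \<partial>M) \<le> rate * (rate ^ t * Psi x0 u0)"
    using expectation_step(2) rate_nonneg by (meson mult_left_mono order_trans)
  with Suc expectation_step(1) show ?case by simp
qed

lemma nn_expectation_bound:
  "(\<integral>\<^sup>+ s. ennreal (Psi (x t s) (u t s)) \<partial>M) \<le> ennreal (rate ^ t * Psi x0 u0)"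
proof -
  have "(\<integral>\<^sup>+ s. ennreal (Psi (x t s) (u t s)) \<partial>M) = ennreal (\<integral>s. Psi (x t s) (u t s) \<partial>M)"
    using expectation_bound[of t] Psi_nonneg by (intro nn_integral_eq_integral) auto
  then show ?thesis using expectation_bound[of t] by (simp add: ennreal_leI)
qed

lemma AE_Psi_tendsto_0: "AE s in M. (\<lambda>t. Psi (x t s) (u t s)) \<longlonglongrightarrow> 0"
  using step_quantities_measurable(2) Psi_nonneg rate_nonneg rate_lt_1 Psi_nonneg nn_expectation_bound
  by (rule AE_tendsto_0_if_nn_integral_geometric)

lemma AE_x_tendsto: "AE s in M. (\<lambda>t. x t s) \<longlonglongrightarrow> xs"
  using AE_Psi_tendsto_0 by eventually_elim (rule tendsto_if_norm_sq_le[OF norm_x_le_Psi])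

lemma AE_u_tendsto: "AE s in M. (\<lambda>t. u t s) \<longlonglongrightarrow> us"
  using AE_Psi_tendsto_0
  by eventually_elim (rule tendsto_if_norm_sq_le[of _ _ "1 / u_weight"], use norm_u_le_Psi in simp)

lemma AE_xhat_tendsto: "AE s in M. (\<lambda>t. xhat (x t s) (u t s)) \<longlonglongrightarrow> xs"
  using AE_x_tendsto AE_u_tendsto
proof eventually_elim
  case (elim s)
  have "(\<lambda>t. gradf (x t s)) \<longlonglongrightarrow> gradf xs"
    using continuous_on_tendsto_compose[OF lipschitz_on_continuous_on[OF f_smooth] elim(1)] by simp
  then have "(\<lambda>t. x t s - \<gamma> *\<^sub>R gradf (x t s) - \<gamma> *\<^sub>R u t s) \<longlonglongrightarrow> xs - \<gamma> *\<^sub>R gradf xs - \<gamma> *\<^sub>R us"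
    by (intro tendsto_intros elim)
  then show ?case by (simp add: rpfb_xhat_def us_def)
qed

end

theorem theorem3:
  fixes f :: "'a::euclidean_space \<Rightarrow> real" and gradf :: "'a \<Rightarrow> 'a"
    and h :: "'a \<Rightarrow> ereal"
    and L\<^sub>f \<mu>\<^sub>f \<mu>\<^sub>h \<gamma> \<omega> :: real
    and M :: "'w measure"
    and x u d :: "nat \<Rightarrow> 'w \<Rightarrow> 'a"
    and x0 u0 xs :: 'a
  assumes M: "prob_space M"
    and f_convex: "convex_on UNIV f"
    and f_grad: "\<And>z. (f has_derivative (\<lambda>v. gradf z \<bullet> v)) (at z)"
    and Lf_pos: "L\<^sub>f > 0"
    and f_smooth: "L\<^sub>f-lipschitz_on UNIV gradf"
    and f_strong: "convex_on UNIV (\<lambda>z. f z - \<mu>\<^sub>f / 2 * norm z ^ 2)"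
    and muf_pos: "\<mu>\<^sub>f > 0"
    and h_proper: "ext_proper h" and h_closed: "ext_closed h" and h_convex: "ext_convex h"
    and muh: "\<mu>\<^sub>h \<ge> 0" and hstar_strong: "ext_strongly_convex \<mu>\<^sub>h (conjugate h)"
    and xs_opt: "- gradf xs \<in> subdiff h xs"
    and gamma_pos: "\<gamma> > 0" and gamma_lt: "\<gamma> < 2 / L\<^sub>f"
    and omega_nonneg: "\<omega> \<ge> 0"
    and init: "\<And>s. s \<in> space M \<Longrightarrow> x 0 s = x0 \<and> u 0 s = u0"
    and step_u: "\<And>t s. s \<in> space M \<Longrightarrow>
        u (Suc t) s = u t s + (1 / (\<gamma> * (1 + \<omega>)\<^sup>2)) *\<^sub>R d t s"
    and step_x: "\<And>t s. s \<in> space M \<Longrightarrow>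
        x (Suc t) s = rpfb_xhat \<gamma> gradf (x t s) (u t s) - (1 / (1 + \<omega>)) *\<^sub>R d t s"
    and d_meas: "\<And>t. d t \<in> borel_measurable M"
    and d_int: "\<And>t. integrable M (d t)"
    and unbiased: "\<And>t b. b \<in> Basis \<Longrightarrow>
        AE s in M. real_cond_exp M (hist_algebra M x u t) (\<lambda>s. d t s \<bullet> b) s
                    = rpfb_r \<gamma> \<omega> h gradf (x t s) (u t s) \<bullet> b"
    and variance: "\<And>t.
        AE s in M. nn_cond_exp M (hist_algebra M x u t)
                     (\<lambda>s. ennreal (norm (d t s - rpfb_r \<gamma> \<omega> h gradf (x t s) (u t s)) ^ 2)) s
                   \<le> ennreal (\<omega> * norm (rpfb_r \<gamma> \<omega> h gradf (x t s) (u t s)) ^ 2)"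
  shows "let us = - gradf xs;
             \<Psi> = (\<lambda>xt ut. (1 / \<gamma>) * norm (xt - xs) ^ 2
                    + (1 + \<omega>) * (\<gamma> * (1 + \<omega>) + 2 * \<mu>\<^sub>h) * norm (ut - us) ^ 2);
             c = max (max ((1 - \<gamma> * \<mu>\<^sub>f)\<^sup>2) ((\<gamma> * L\<^sub>f - 1)\<^sup>2))
                   (1 - (1 + 2 / \<gamma> * \<mu>\<^sub>h) / ((1 + \<omega>) * (1 + \<omega> + 2 / \<gamma> * \<mu>\<^sub>h)))
         in c < 1
            \<and> (\<forall>t. (\<integral>\<^sup>+ s. ennreal (\<Psi> (x t s) (u t s)) \<partial>M) \<le> ennreal (c ^ t * \<Psi> x0 u0))
            \<and> (AE s in M. (\<lambda>t. x t s) \<longlonglongrightarrow> xs)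
            \<and> (AE s in M. (\<lambda>t. rpfb_xhat \<gamma> gradf (x t s) (u t s)) \<longlonglongrightarrow> xs)
            \<and> (AE s in M. (\<lambda>t. u t s) \<longlonglongrightarrow> us)"
proof -
  interpret rpfb_process f gradf h "L\<^sub>f" "\<mu>\<^sub>f" "\<mu>\<^sub>h" \<gamma> \<omega> xs M x u d x0 u0
    by (intro rpfb_process.intro rpfb_setting.intro rpfb_process_axioms.intro) (fact assms)+
  show ?thesis
    using rate_lt_1 nn_expectation_bound AE_x_tendsto AE_xhat_tendsto AE_u_tendsto
    unfolding Let_def Psi_def us_def rate_def by blast
qed

end
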